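(* Let $U\subset\mathbb{R}^n$ be open and connected, and let $Qw=\Delta w-\frac{D^2w(Dw,Dw)}{1+|Dw|^2}+|Dw|^2$. Suppose $w,w'\in C^2(U)$ satisfy $Qw\ge Qw'$ and $w\le w'$ in $U$. If $w(x)=w'(x)$ at some point $x\in U$, then $w\equiv w'$ in $U$. Consequently, if $u,u'\in C^2(U)$ with $u,u'>0$ satisfy $$\operatorname{div}\frac{u\,Du}{\sqrt{u^2+|Du|^2}}\ge \operatorname{div}\frac{u'\,Du'}{\sqrt{(u')^2+|Du'|^2}}$$ and $u\le u'$ in $U$, and if $u(x)=u'(x)$ at some point $x\in U$, then $u\equiv u'$ in $U$.
   Context: $D^2w(Dw,Dw)=\sum_{i,j}\partial_i\partial_j w\,\partial_i w\,\partial_j w$. *)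

theory Defs
  imports "HOL-Analysis.Analysis"
begin

definition pd :: "'a::euclidean_space \<Rightarrow> ('a \<Rightarrow> real) \<Rightarrow> 'a \<Rightarrow> real" where
  "pd i f x = frechet_derivative f (at x) i"

definition grad :: "('a::euclidean_space \<Rightarrow> real) \<Rightarrow> 'a \<Rightarrow> 'a" where
  "grad f x = (\<Sum>i\<in>Basis. pd i f x *\<^sub>R i)"

definition lap :: "('a::euclidean_space \<Rightarrow> real) \<Rightarrow> 'a \<Rightarrow> real" where
  "lap f x = (\<Sum>i\<in>Basis. pd i (pd i f) x)"

definition hess_grad_grad :: "('a::euclidean_space \<Rightarrow> real) \<Rightarrow> 'a \<Rightarrow> real" where
  "hess_grad_grad f x = (\<Sum>i\<in>Basis. \<Sum>j\<in>Basis. pd i (pd j f) x * pd i f x * pd j f x)"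

definition Qop :: "('a::euclidean_space \<Rightarrow> real) \<Rightarrow> 'a \<Rightarrow> real" where
  "Qop w x = lap w x - hess_grad_grad w x / (1 + (norm (grad w x))\<^sup>2) + (norm (grad w x))\<^sup>2"

definition divg :: "('a::euclidean_space \<Rightarrow> 'a) \<Rightarrow> 'a \<Rightarrow> real" where
  "divg V x = (\<Sum>i\<in>Basis. pd i (\<lambda>y. V y \<bullet> i) x)"

definition C2_on :: "'a::euclidean_space set \<Rightarrow> ('a \<Rightarrow> real) \<Rightarrow> bool" where
  "C2_on U f \<longleftrightarrow>
     (\<forall>x\<in>U. f differentiable (at x)) \<and>
     (\<forall>i\<in>Basis. \<forall>x\<in>U. pd i f differentiable (at x)) \<and>
     (\<forall>i\<in>Basis. \<forall>j\<in>Basis. continuous_on U (pd j (pd i f)))"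

end

theory Submission
  imports Defs
begin

text \<open>Both operators have the quasilinear form
  \<open>G(u, Du, D\<^sup>2u) = c(u, Du) (tr D\<^sup>2u - D\<^sup>2u(q, q)) + b(u, Du)\<close>, where \<open>c > 0\<close> and \<open>|q| < 1\<close>
  locally uniformly and \<open>G\<close> is locally Lipschitz in \<open>(u, Du)\<close>: for \<open>Q\<close> take \<open>c = 1\<close>,
  \<open>q = Dw / sqrt(1 + |Dw|\<^sup>2)\<close>, \<open>b = |Dw|\<^sup>2\<close>; for the divergence operator \<open>c = u / S\<close>, \<open>q = Du / S\<close>
  with \<open>S = sqrt(u\<^sup>2 + |Du|\<^sup>2)\<close>, and this is where \<open>u > 0\<close> is needed.

  For such operators the contact set \<open>{w = w'}\<close> is open. Otherwise a ball \<open>B\<^sub>R(y\<^sub>0)\<close> inside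
  \<open>{w < w'}\<close> touches it at a point \<open>x\<^sub>0\<close> with \<open>|x\<^sub>0 - y\<^sub>0| = R\<close>, and Hopf's argument applies to
  \<open>w' - \<epsilon> h - w\<close> with the barrier \<open>h = exp(-\<alpha> |x - y\<^sub>0|\<^sup>2) - exp(-\<alpha> R\<^sup>2)\<close>: for large \<open>\<alpha>\<close> it
  cannot have a negative minimum inside the annulus \<open>R/2 < |x - y\<^sub>0| < R\<close>, because there the
  Hessian of \<open>\<epsilon> h\<close> outweighs the Lipschitz error of \<open>G\<close>, so it is nonnegative on the annulus;
  yet it vanishes at \<open>x\<^sub>0\<close> with negative inward derivative. The contact set is also closed, and \<open>U\<close>
  is connected.\<close>

lemma norm_square_eq_sum_Basis: "(norm x)\<^sup>2 = (\<Sum>i\<in>Basis. (x \<bullet> i)\<^sup>2)"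
proof -
  have "(norm x)\<^sup>2 = (\<Sum>i\<in>Basis. (x \<bullet> i) * (x \<bullet> i))"
    by (simp add: power2_norm_eq_inner euclidean_inner[of x x])
  then show ?thesis by (simp add: power2_eq_square)
qed

lemma sum_inner_Basis_delta: "j \<in> Basis \<Longrightarrow> (\<Sum>i\<in>Basis. (j \<bullet> i) * g i) = g j"
proof -
  assume j: "j \<in> Basis"
  have "(\<Sum>i\<in>Basis. (j \<bullet> i) * g i) = (\<Sum>i\<in>Basis. if i = j then g i else 0)"
    by (rule sum.cong) (auto simp: inner_Basis j)
  with j show ?thesis by simp
qed

lemma pd_eq_derivative: "(f has_derivative f') (at x) \<Longrightarrow> pd i f x = f' i"
  unfolding pd_def by (metis frechet_derivative_at)

lemma grad_inner_Basis: "i \<in> Basis \<Longrightarrow> grad f x \<bullet> i = pd i f x"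
  unfolding grad_def by (simp add: inner_sum_left inner_Basis if_distrib sum.delta cong: if_cong)

lemma norm_grad_square: "(norm (grad f x))\<^sup>2 = (\<Sum>i\<in>Basis. (pd i f x)\<^sup>2)"
  by (simp add: norm_square_eq_sum_Basis grad_inner_Basis)

lemma has_derivative_pd_sum:
  assumes "f differentiable (at x)"
  shows "(f has_derivative (\<lambda>h. \<Sum>i\<in>Basis. (h \<bullet> i) * pd i f x)) (at x)"
proof -
  let ?D = "frechet_derivative f (at x)"
  have D: "(f has_derivative ?D) (at x)" using assms frechet_derivative_works by blast
  have "?D h = (\<Sum>i\<in>Basis. (h \<bullet> i) * pd i f x)" for h
  proof -
    have "?D h = ?D (\<Sum>i\<in>Basis. (h \<bullet> i) *\<^sub>R i)" by (simp add: euclidean_representation)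
    also have "\<dots> = (\<Sum>i\<in>Basis. (h \<bullet> i) * ?D i)"
      using has_derivative_linear[OF D] by (simp add: linear_sum linear_cmul)
    finally show ?thesis by (simp add: pd_def)
  qed
  then have "?D = (\<lambda>h. \<Sum>i\<in>Basis. (h \<bullet> i) * pd i f x)" by auto
  with D show ?thesis by simp
qed

lemma pd_cong_open:
  assumes "open S" "x \<in> S" "\<And>y. y \<in> S \<Longrightarrow> f y = g y"
  shows "pd i f x = pd i g x"
proof -
  have "(\<lambda>D. (f has_derivative D) (at x)) = (\<lambda>D. (g has_derivative D) (at x))"
    using assms by (metis has_derivative_transform_within_open)
  then show ?thesis unfolding pd_def frechet_derivative_def by simp
qed

lemma pd_diff:
  "f differentiable (at x) \<Longrightarrow> g differentiable (at x) \<Longrightarrow>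
    pd i (\<lambda>z. f z - g z) x = pd i f x - pd i g x"
  by (rule pd_eq_derivative) (auto intro: has_derivative_diff simp: frechet_derivative_works pd_def)

lemma pd_cmult: "f differentiable (at x) \<Longrightarrow> pd i (\<lambda>z. c * f z) x = c * pd i f x"
  by (rule pd_eq_derivative) (auto intro: has_derivative_mult_right simp: frechet_derivative_works pd_def)

lemma has_real_derivative_line:
  assumes "f differentiable (at (x + t *\<^sub>R v))"
  shows "((\<lambda>s. f (x + s *\<^sub>R v)) has_real_derivative
           (\<Sum>j\<in>Basis. (v \<bullet> j) * pd j f (x + t *\<^sub>R v))) (at t)"
proof -
  have "((\<lambda>s. x + s *\<^sub>R v) has_derivative (\<lambda>s. s *\<^sub>R v)) (at t)"
    by (intro derivative_eq_intros) auto
  from has_derivative_compose[OF this has_derivative_pd_sum[OF assms]]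
  have "((\<lambda>s. f (x + s *\<^sub>R v)) has_derivative
      (\<lambda>s. \<Sum>i\<in>Basis. ((s *\<^sub>R v) \<bullet> i) * pd i f (x + t *\<^sub>R v))) (at t)"
    by (simp add: o_def)
  moreover have "(\<lambda>s. \<Sum>i\<in>Basis. ((s *\<^sub>R v) \<bullet> i) * pd i f (x + t *\<^sub>R v))
     = (*) (\<Sum>j\<in>Basis. (v \<bullet> j) * pd j f (x + t *\<^sub>R v))"
    by (rule ext, subst sum_distrib_right, rule sum.cong, simp, simp add: algebra_simps)
  ultimately show ?thesis unfolding has_field_derivative_def by simp
qed

lemma has_real_derivative_line_Basis:
  "f differentiable (at x) \<Longrightarrow> i \<in> Basis \<Longrightarrow>
    ((\<lambda>t. f (x + t *\<^sub>R i)) has_real_derivative pd i f x) (at 0)"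
  using has_real_derivative_line[of f x 0 i] sum_inner_Basis_delta[of i] by simp

subsection \<open>Necessary conditions at a minimum\<close>

lemma pd_eq_0_at_min:
  fixes f :: "'a::euclidean_space \<Rightarrow> real"
  assumes "open S" "x \<in> S" "\<forall>y\<in>S. f x \<le> f y" "f differentiable (at x)" "j \<in> Basis"
  shows "pd j f x = 0"
proof -
  have "(\<lambda>h. \<Sum>i\<in>Basis. (h \<bullet> i) * pd i f x) = (\<lambda>v. 0)"
    using differential_zero_maxmin[OF assms(2,1) has_derivative_pd_sum[OF assms(4)]] assms(3)
    by blast
  then have "(\<Sum>i\<in>Basis. (j \<bullet> i) * pd i f x) = 0" by metis
  with sum_inner_Basis_delta[OF assms(5)] show ?thesis by simp
qed

lemma DERIV_second_nonneg_at_min: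
  fixes g g' :: "real \<Rightarrow> real"
  assumes "e > 0" and "\<And>s. \<bar>s\<bar> < e \<Longrightarrow> (g has_real_derivative g' s) (at s)"
    and "g' 0 = 0" and "(g' has_real_derivative Q) (at 0)"
    and "\<And>s. \<bar>s\<bar> < e \<Longrightarrow> g 0 \<le> g s"
  shows "Q \<ge> 0"
proof (rule ccontr)
  assume "\<not> Q \<ge> 0"
  then obtain d where d: "d > 0" "\<And>h. 0 < h \<Longrightarrow> h < d \<Longrightarrow> g' h < 0"
    using DERIV_neg_dec_right[OF assms(4)] assms(3) by force
  define t where "t = min d e / 2"
  have t: "0 < t" "t < d" "t < e" using d assms(1) by (auto simp: t_def)
  obtain z where z: "0 < z" "z < t" "g t - g 0 = (t - 0) * g' z"
    using MVT2[of 0 t g g'] t assms(2) by force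
  have "t * g' z < 0" using d z t by (simp add: mult_pos_neg)
  with z assms(5)[of t] t show False by simp
qed

lemma hessian_form_nonneg_at_min:
  fixes f :: "'a::euclidean_space \<Rightarrow> real"
  assumes S: "open S" "x \<in> S" and min: "\<forall>y\<in>S. f x \<le> f y"
    and df: "\<forall>y\<in>S. f differentiable (at y)"
    and dpf: "\<forall>j\<in>Basis. pd j f differentiable (at x)"
  shows "(\<Sum>i\<in>Basis. \<Sum>j\<in>Basis. (v \<bullet> i) * (v \<bullet> j) * pd i (pd j f) x) \<ge> 0"
proof -
  obtain e where e: "e > 0" "ball x e \<subseteq> S" using S open_contains_ball by blast
  define e' where "e' = e / (norm v + 1)"
  have nv: "norm v + 1 > 0" by (simp add: add_nonneg_pos)
  then have e': "e' > 0" using e by (simp add: e'_def)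
  have inS: "x + s *\<^sub>R v \<in> S" if "\<bar>s\<bar> < e'" for s
  proof -
    have "\<bar>s\<bar> * norm v \<le> \<bar>s\<bar> * (norm v + 1)" by (simp add: mult_left_mono)
    also have "\<dots> < e" using that nv by (simp add: e'_def pos_less_divide_eq)
    finally show ?thesis using e(2) by (auto simp: dist_norm)
  qed
  define g' where "g' s = (\<Sum>j\<in>Basis. (v \<bullet> j) * pd j f (x + s *\<^sub>R v))" for s
  show ?thesis
  proof (rule DERIV_second_nonneg_at_min[OF e', where g = "\<lambda>s. f (x + s *\<^sub>R v)" and g' = g'])
    show "((\<lambda>s. f (x + s *\<^sub>R v)) has_real_derivative g' s) (at s)" if "\<bar>s\<bar> < e'" for s
      unfolding g'_def using df inS[OF that] by (intro has_real_derivative_line) blast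
    show "g' 0 = 0"
      using pd_eq_0_at_min[OF S min] df S by (simp add: g'_def)
    show "f (x + 0 *\<^sub>R v) \<le> f (x + s *\<^sub>R v)" if "\<bar>s\<bar> < e'" for s
      using min inS[OF that] by simp
    have "((\<lambda>s. pd j f (x + s *\<^sub>R v)) has_real_derivative
        (\<Sum>i\<in>Basis. (v \<bullet> i) * pd i (pd j f) x)) (at 0)" if "j \<in> Basis" for j
      using has_real_derivative_line[of "pd j f" x 0 v] dpf that by simp
    then have "(g' has_real_derivative
        (\<Sum>j\<in>Basis. (v \<bullet> j) * (\<Sum>i\<in>Basis. (v \<bullet> i) * pd i (pd j f) x))) (at 0)"
      unfolding g'_def by (intro DERIV_sum DERIV_cmult)
    then show "(g' has_real_derivative
        (\<Sum>i\<in>Basis. \<Sum>j\<in>Basis. (v \<bullet> i) * (v \<bullet> j) * pd i (pd j f) x)) (at 0)"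
      by (subst sum.swap) (simp add: sum_distrib_left mult.assoc mult.commute mult.left_commute)
  qed
qed

subsection \<open>Matrices as bilinear forms\<close>

text \<open>A matrix is a function on pairs of basis vectors.\<close>

definition bform :: "('a::euclidean_space \<Rightarrow> 'a \<Rightarrow> real) \<Rightarrow> 'a \<Rightarrow> 'a \<Rightarrow> real" where
  "bform N x y = (\<Sum>k\<in>Basis. \<Sum>l\<in>Basis. (x \<bullet> k) * (y \<bullet> l) * N k l)"

definition form_trace :: "('a::euclidean_space \<Rightarrow> 'a \<Rightarrow> real) \<Rightarrow> real" where
  "form_trace N = (\<Sum>i\<in>Basis. N i i)"

definition psd_form :: "('a::euclidean_space \<Rightarrow> 'a \<Rightarrow> real) \<Rightarrow> bool" where
  "psd_form N \<longleftrightarrow> (\<forall>v. bform N v v \<ge> 0)"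

lemma bform_cong:
  "(\<And>i j. i \<in> Basis \<Longrightarrow> j \<in> Basis \<Longrightarrow> N i j = N' i j) \<Longrightarrow> bform N x y = bform N' x y"
  unfolding bform_def by (intro sum.cong) auto

lemma bform_Basis: "a \<in> Basis \<Longrightarrow> b \<in> Basis \<Longrightarrow> bform N a b = N a b"
proof -
  assume a: "a \<in> Basis" and b: "b \<in> Basis"
  have "bform N a b = (\<Sum>k\<in>Basis. (a \<bullet> k) * (\<Sum>l\<in>Basis. (b \<bullet> l) * N k l))"
    unfolding bform_def by (simp add: sum_distrib_left mult.assoc)
  also have "\<dots> = (\<Sum>l\<in>Basis. (b \<bullet> l) * N a l)" using a by (rule sum_inner_Basis_delta)
  also have "\<dots> = N a b" using b by (rule sum_inner_Basis_delta)
  finally show ?thesis .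
qed

lemma bform_scaleR_add:
  "bform N (t *\<^sub>R a + b) (t *\<^sub>R a + b) = t\<^sup>2 * bform N a a + t * (bform N a b + bform N b a) + bform N b b"
proof -
  have "((t *\<^sub>R a + b) \<bullet> k) * ((t *\<^sub>R a + b) \<bullet> l) * N k l
     = t\<^sup>2 * ((a \<bullet> k) * (a \<bullet> l) * N k l) + (t * ((a \<bullet> k) * (b \<bullet> l) * N k l) + t * ((b \<bullet> k) * (a \<bullet> l) * N k l))
       + (b \<bullet> k) * (b \<bullet> l) * N k l" for k l
    unfolding inner_add_left inner_scaleR_left power2_eq_square by algebra
  then show ?thesis unfolding bform_def
    by (simp only: sum.distrib sum_distrib_left distrib_left)
qed

lemma bform_scaleR: "bform N (s *\<^sub>R p) (s *\<^sub>R p) = s\<^sup>2 * bform N p p"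
  unfolding bform_def by (simp add: sum_distrib_left power2_eq_square algebra_simps)

lemma bform_diff: "bform (\<lambda>i j. N i j - N' i j) x y = bform N x y - bform N' x y"
  unfolding bform_def by (simp add: algebra_simps sum_subtractf)

lemma bform_cmult: "bform (\<lambda>i j. c * N i j) x y = c * bform N x y"
  unfolding bform_def by (simp add: sum_distrib_left algebra_simps)

lemma bform_outer: "bform (\<lambda>i j. (d \<bullet> i) * (d \<bullet> j)) q q = (q \<bullet> d)\<^sup>2"
proof -
  have "bform (\<lambda>i j. (d \<bullet> i) * (d \<bullet> j)) q q
      = (\<Sum>k\<in>Basis. (q \<bullet> k) * (d \<bullet> k)) * (\<Sum>l\<in>Basis. (q \<bullet> l) * (d \<bullet> l))"
    unfolding bform_def sum_product by (simp add: algebra_simps)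
  then show ?thesis by (simp add: euclidean_inner[symmetric] power2_eq_square)
qed

lemma bform_inner: "bform (\<lambda>i j. i \<bullet> j) q q = (norm q)\<^sup>2"
proof -
  have "bform (\<lambda>i j. i \<bullet> j) q q = (\<Sum>k\<in>Basis. (q \<bullet> k) * (\<Sum>l\<in>Basis. (k \<bullet> l) * (q \<bullet> l)))"
    unfolding bform_def by (simp add: sum_distrib_left algebra_simps)
  also have "\<dots> = (\<Sum>k\<in>Basis. (q \<bullet> k)\<^sup>2)"
    by (rule sum.cong) (simp_all add: sum_inner_Basis_delta power2_eq_square)
  finally show ?thesis by (simp add: norm_square_eq_sum_Basis)
qed

lemma form_trace_diff: "form_trace (\<lambda>i j. N i j - N' i j) = form_trace N - form_trace N'"
  unfolding form_trace_def by (simp add: sum_subtractf)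

lemma form_trace_cmult: "form_trace (\<lambda>i j. c * N i j) = c * form_trace N"
  unfolding form_trace_def by (simp add: sum_distrib_left)

lemma form_trace_outer: "form_trace (\<lambda>i j. (d \<bullet> i) * (d \<bullet> j)) = (norm d)\<^sup>2"
  unfolding form_trace_def norm_square_eq_sum_Basis by (simp add: power2_eq_square)

lemma form_trace_inner: "form_trace (\<lambda>i j::'a::euclidean_space. i \<bullet> j) = DIM('a)"
  unfolding form_trace_def by simp

lemma quadratic_nonneg_imp_discrim_le:
  fixes A B C :: real
  assumes nonneg: "\<And>t. A * t\<^sup>2 + B * t + C \<ge> 0"
  shows "B\<^sup>2 \<le> 4 * A * C"
proof -
  consider "A > 0" | "A = 0" | "A < 0" by linarith
  then show ?thesis
  proof cases
    case 1
    with nonneg[of "- B / (2 * A)"] show ?thesis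
      by (simp add: power2_eq_square field_simps)
  next
    case 2
    have "B = 0"
    proof (rule ccontr)
      assume "B \<noteq> 0"
      with 2 nonneg[of "- (C + 1) / B"] show False by simp
    qed
    with 2 show ?thesis by simp
  next
    case 3
    define t where "t = sqrt ((\<bar>C\<bar> + 1) / - A)"
    have "(\<bar>C\<bar> + 1) / - A \<ge> 0" using 3 by (intro divide_nonneg_pos) auto
    then have "t\<^sup>2 = (\<bar>C\<bar> + 1) / - A" by (simp add: t_def)
    then have "A * t\<^sup>2 = - (\<bar>C\<bar> + 1)" using 3 by simp
    with nonneg[of t] nonneg[of "- t"] show ?thesis by simp
  qed
qed

lemma psd_form_offdiag:
  assumes "psd_form N" "i \<in> Basis" "j \<in> Basis"
  shows "(N i j + N j i)\<^sup>2 \<le> 4 * N i i * N j j"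
proof (rule quadratic_nonneg_imp_discrim_le)
  fix t
  have "bform N (t *\<^sub>R i + j) (t *\<^sub>R i + j) \<ge> 0" using assms(1) by (simp add: psd_form_def)
  then show "N i i * t\<^sup>2 + (N i j + N j i) * t + N j j \<ge> 0"
    unfolding bform_scaleR_add using assms(2,3) by (simp add: bform_Basis algebra_simps)
qed

lemma bform_symmetrize:
  "bform N q q = (\<Sum>k\<in>Basis. \<Sum>l\<in>Basis. (N k l + N l k) / 2 * (q \<bullet> k) * (q \<bullet> l))"
proof -
  have swap: "(\<Sum>k\<in>Basis. \<Sum>l\<in>Basis. N l k * (q \<bullet> k) * (q \<bullet> l)) = bform N q q"
    unfolding bform_def by (subst sum.swap) (simp add: algebra_simps)
  have "(\<Sum>k\<in>Basis. \<Sum>l\<in>Basis. (N k l + N l k) / 2 * (q \<bullet> k) * (q \<bullet> l))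
      = ((\<Sum>k\<in>Basis. \<Sum>l\<in>Basis. N k l * (q \<bullet> k) * (q \<bullet> l))
         + (\<Sum>k\<in>Basis. \<Sum>l\<in>Basis. N l k * (q \<bullet> k) * (q \<bullet> l))) / 2"
    by (simp add: sum.distrib sum_divide_distrib algebra_simps add_divide_distrib)
  also have "(\<Sum>k\<in>Basis. \<Sum>l\<in>Basis. N k l * (q \<bullet> k) * (q \<bullet> l)) = bform N q q"
    unfolding bform_def by (simp add: algebra_simps)
  finally show ?thesis using swap by simp
qed

lemma psd_form_diag_nonneg: "psd_form N \<Longrightarrow> i \<in> Basis \<Longrightarrow> N i i \<ge> 0"
  unfolding psd_form_def by (metis bform_Basis)

lemma psd_form_symm_part_bound:
  assumes "psd_form N" "k \<in> Basis" "l \<in> Basis"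
  shows "\<bar>(N k l + N l k) / 2\<bar> \<le> sqrt (N k k) * sqrt (N l l)"
proof -
  have "((N k l + N l k) / 2)\<^sup>2 \<le> N k k * N l l"
    using psd_form_offdiag[OF assms] by (simp add: power_divide)
  also have "\<dots> = (sqrt (N k k) * sqrt (N l l))\<^sup>2"
    using psd_form_diag_nonneg[OF assms(1)] assms(2,3) by (simp add: power_mult_distrib)
  finally have "\<bar>(N k l + N l k) / 2\<bar> \<le> \<bar>sqrt (N k k) * sqrt (N l l)\<bar>"
    by (simp only: abs_le_square_iff)
  then show ?thesis using psd_form_diag_nonneg[OF assms(1)] assms(2,3) by simp
qed

lemma psd_form_bform_le_trace:
  assumes psd: "psd_form N" and q: "norm q \<le> 1"
  shows "bform N q q \<le> form_trace N"
proof -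
  define r where "r i = sqrt (N i i)" for i
  have el: "(N k l + N l k) / 2 * (q \<bullet> k) * (q \<bullet> l) \<le> (\<bar>q \<bullet> k\<bar> * r k) * (\<bar>q \<bullet> l\<bar> * r l)"
    if "k \<in> Basis" "l \<in> Basis" for k l
  proof -
    have "(N k l + N l k) / 2 * ((q \<bullet> k) * (q \<bullet> l))
        \<le> \<bar>(N k l + N l k) / 2\<bar> * \<bar>(q \<bullet> k) * (q \<bullet> l)\<bar>"
      by (metis abs_ge_self abs_mult)
    also have "\<dots> \<le> r k * r l * \<bar>(q \<bullet> k) * (q \<bullet> l)\<bar>"
      using psd_form_symm_part_bound[OF psd that] by (intro mult_right_mono) (auto simp: r_def)
    finally show ?thesis by (simp add: abs_mult algebra_simps)
  qed
  have "bform N q q \<le> (\<Sum>k\<in>Basis. \<Sum>l\<in>Basis. (\<bar>q \<bullet> k\<bar> * r k) * (\<bar>q \<bullet> l\<bar> * r l))"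
    unfolding bform_symmetrize by (intro sum_mono el)
  also have "\<dots> = (\<Sum>k\<in>Basis. \<bar>q \<bullet> k\<bar> * r k)\<^sup>2"
    by (simp only: power2_eq_square sum_product)
  also have "\<dots> \<le> (\<Sum>k\<in>Basis. \<bar>q \<bullet> k\<bar>\<^sup>2) * (\<Sum>k\<in>Basis. (r k)\<^sup>2)"
    by (rule Cauchy_Schwarz_ineq_sum)
  also have "\<dots> = (norm q)\<^sup>2 * form_trace N"
    using psd_form_diag_nonneg[OF psd]
    by (simp add: norm_square_eq_sum_Basis form_trace_def r_def)
  also have "\<dots> \<le> form_trace N"
    using q psd_form_diag_nonneg[OF psd]
    by (intro mult_left_le_one_le) (auto simp: form_trace_def power_le_one intro!: sum_nonneg)
  finally show ?thesis .
qed

definition principal_part :: "'a::euclidean_space \<Rightarrow> ('a \<Rightarrow> 'a \<Rightarrow> real) \<Rightarrow> real" where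
  "principal_part q N = form_trace N - bform N q q"

lemma principal_part_diff:
  "principal_part q (\<lambda>i j. N i j - N' i j) = principal_part q N - principal_part q N'"
  unfolding principal_part_def bform_diff form_trace_diff by simp

lemma principal_part_cmult: "principal_part q (\<lambda>i j. c * N i j) = c * principal_part q N"
  unfolding principal_part_def bform_cmult form_trace_cmult by (simp add: algebra_simps)

lemma principal_part_nonneg: "psd_form N \<Longrightarrow> norm q \<le> 1 \<Longrightarrow> principal_part q N \<ge> 0"
  unfolding principal_part_def using psd_form_bform_le_trace by fastforce

lemma principal_part_barrier_hessian:
  fixes q d :: "'a::euclidean_space"
  assumes E: "E \<ge> 0" and \<alpha>: "\<alpha> \<ge> 0" and q: "(norm q)\<^sup>2 \<le> 1 - \<theta>" and \<theta>: "\<theta> \<ge> 0"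
    and \<rho>: "0 \<le> \<rho>" "\<rho> \<le> norm d"
  shows "principal_part q (\<lambda>i j. E * (4 * \<alpha>\<^sup>2 * (d \<bullet> i) * (d \<bullet> j) - 2 * \<alpha> * (i \<bullet> j)))
    \<ge> E * (4 * \<alpha>\<^sup>2 * \<rho>\<^sup>2 * \<theta> - 2 * \<alpha> * DIM('a))"
proof -
  let ?X = "(norm d)\<^sup>2 - (q \<bullet> d)\<^sup>2"
  have "(\<lambda>i j. E * (4 * \<alpha>\<^sup>2 * (d \<bullet> i) * (d \<bullet> j) - 2 * \<alpha> * (i \<bullet> j)))
      = (\<lambda>i j. (E * 4 * \<alpha>\<^sup>2) * ((d \<bullet> i) * (d \<bullet> j)) - (E * 2 * \<alpha>) * (i \<bullet> j))"
    by (simp add: algebra_simps)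
  then have "principal_part q (\<lambda>i j. E * (4 * \<alpha>\<^sup>2 * (d \<bullet> i) * (d \<bullet> j) - 2 * \<alpha> * (i \<bullet> j)))
      = (E * 4 * \<alpha>\<^sup>2) * principal_part q (\<lambda>i j. (d \<bullet> i) * (d \<bullet> j))
        - (E * 2 * \<alpha>) * principal_part q (\<lambda>i j. i \<bullet> j)"
    by (simp only: principal_part_diff principal_part_cmult)
  also have "\<dots> = E * (4 * (\<alpha>\<^sup>2 * ?X) + 2 * (\<alpha> * (norm q)\<^sup>2) - 2 * \<alpha> * DIM('a))"
    by (simp add: principal_part_def bform_outer bform_inner form_trace_outer form_trace_inner
        algebra_simps)
  finally have eq: "principal_part q (\<lambda>i j. E * (4 * \<alpha>\<^sup>2 * (d \<bullet> i) * (d \<bullet> j) - 2 * \<alpha> * (i \<bullet> j)))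
      = E * (4 * (\<alpha>\<^sup>2 * ?X) + 2 * (\<alpha> * (norm q)\<^sup>2) - 2 * \<alpha> * DIM('a))" .
  have "(q \<bullet> d)\<^sup>2 \<le> (norm q)\<^sup>2 * (norm d)\<^sup>2"
    using Cauchy_Schwarz_ineq2[of q d] abs_le_square_iff[of "q \<bullet> d" "norm q * norm d"]
    by (simp add: power_mult_distrib)
  moreover have "\<rho>\<^sup>2 * \<theta> \<le> (norm d)\<^sup>2 * (1 - (norm q)\<^sup>2)"
    using \<rho> q \<theta> by (intro mult_mono power_mono) auto
  ultimately have "\<rho>\<^sup>2 * \<theta> \<le> ?X" by (simp add: algebra_simps)
  then have "\<alpha>\<^sup>2 * (\<rho>\<^sup>2 * \<theta>) \<le> \<alpha>\<^sup>2 * ?X" by (rule mult_left_mono) simp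
  moreover have "0 \<le> \<alpha> * (norm q)\<^sup>2" using \<alpha> by simp
  ultimately have "4 * \<alpha>\<^sup>2 * \<rho>\<^sup>2 * \<theta> - 2 * \<alpha> * DIM('a)
      \<le> 4 * (\<alpha>\<^sup>2 * ?X) + 2 * (\<alpha> * (norm q)\<^sup>2) - 2 * \<alpha> * DIM('a)"
    by (simp add: mult.assoc)
  with E show ?thesis unfolding eq by (rule mult_left_mono[rotated])
qed

definition hessian :: "('a::euclidean_space \<Rightarrow> real) \<Rightarrow> 'a \<Rightarrow> 'a \<Rightarrow> 'a \<Rightarrow> real" where
  "hessian f x = (\<lambda>i j. pd i (pd j f) x)"

lemma C2_on_differentiable: "C2_on U f \<Longrightarrow> x \<in> U \<Longrightarrow> f differentiable (at x)"
  unfolding C2_on_def by blast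

lemma C2_on_pd_differentiable:
  "C2_on U f \<Longrightarrow> x \<in> U \<Longrightarrow> i \<in> Basis \<Longrightarrow> pd i f differentiable (at x)"
  unfolding C2_on_def by blast

lemma C2_on_continuous_on:
  assumes "C2_on U f"
  shows "continuous_on U f" "i \<in> Basis \<Longrightarrow> continuous_on U (pd i f)"
    "i \<in> Basis \<Longrightarrow> j \<in> Basis \<Longrightarrow> continuous_on U (pd i (pd j f))"
  using assms unfolding C2_on_def
  by (meson continuous_at_imp_continuous_on differentiable_imp_continuous_within)+

lemma continuous_on_grad:
  "(\<And>i. i \<in> Basis \<Longrightarrow> continuous_on S (pd i f)) \<Longrightarrow> continuous_on S (grad f)"
  unfolding grad_def by (intro continuous_intros) auto

lemma grad_diff: "grad f x - grad g x = (\<Sum>i\<in>Basis. (pd i f x - pd i g x) *\<^sub>R i)"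
  unfolding grad_def by (simp add: sum_subtractf scaleR_left_diff_distrib)

lemma differentiable_transform_open:
  "f differentiable (at x) \<Longrightarrow> open S \<Longrightarrow> x \<in> S \<Longrightarrow> (\<And>y. y \<in> S \<Longrightarrow> f y = g y) \<Longrightarrow>
    g differentiable (at x)"
  unfolding differentiable_def by (metis has_derivative_transform_within_open)

lemma pd_lincomb:
  "f differentiable (at x) \<Longrightarrow> g differentiable (at x) \<Longrightarrow> h differentiable (at x) \<Longrightarrow>
    pd i (\<lambda>z. f z - c * g z - h z) x = pd i f x - c * pd i g x - pd i h x"
  by (simp add: pd_diff pd_cmult)

lemma
  fixes u u' g :: "'a::euclidean_space \<Rightarrow> real"
  assumes U: "open U" and Cu: "C2_on U u" and Cu': "C2_on U u'"
    and dg: "\<And>x. g differentiable (at x)" and dpg: "\<And>j x. pd j g differentiable (at x)"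
    and z: "z \<in> U"
  shows C2_perturbed_differentiable: "(\<lambda>x. u' x - c * g x - u x) differentiable (at z)"
    and C2_perturbed_pd: "pd j (\<lambda>x. u' x - c * g x - u x) z = pd j u' z - c * pd j g z - pd j u z"
    and C2_perturbed_pd_differentiable:
      "j \<in> Basis \<Longrightarrow> pd j (\<lambda>x. u' x - c * g x - u x) differentiable (at z)"
    and C2_perturbed_hessian: "j \<in> Basis \<Longrightarrow>
      hessian (\<lambda>x. u' x - c * g x - u x) z i j = hessian u' z i j - c * hessian g z i j - hessian u z i j"
proof -
  note du = C2_on_differentiable[OF Cu] and du' = C2_on_differentiable[OF Cu']
  note dpu = C2_on_pd_differentiable[OF Cu] and dpu' = C2_on_pd_differentiable[OF Cu']
  show "(\<lambda>x. u' x - c * g x - u x) differentiable (at z)"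
    using du'[OF z] dg du[OF z] by simp
  show "pd j (\<lambda>x. u' x - c * g x - u x) z = pd j u' z - c * pd j g z - pd j u z"
    using du'[OF z] dg du[OF z] by (rule pd_lincomb)
  define F where "F x = pd j u' x - c * pd j g x - pd j u x" for x
  have pdF: "pd j (\<lambda>x. u' x - c * g x - u x) x = F x" if "x \<in> U" for x
    using du'[OF that] dg du[OF that] unfolding F_def by (rule pd_lincomb)
  assume j: "j \<in> Basis"
  have dF: "F differentiable (at z)"
    unfolding F_def using dpu'[OF z j] dpg dpu[OF z j] by simp
  then show "pd j (\<lambda>x. u' x - c * g x - u x) differentiable (at z)"
    by (rule differentiable_transform_open[OF _ U z]) (simp add: pdF)
  have "pd i (pd j (\<lambda>x. u' x - c * g x - u x)) z = pd i F z"
    using pdF by (rule pd_cong_open[OF U z])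
  also have "\<dots> = pd i (pd j u') z - c * pd i (pd j g) z - pd i (pd j u) z"
    unfolding F_def using dpu'[OF z j] dpg dpu[OF z j] by (rule pd_lincomb)
  finally show "hessian (\<lambda>x. u' x - c * g x - u x) z i j
      = hessian u' z i j - c * hessian g z i j - hessian u z i j"
    by (simp add: hessian_def)
qed

subsection \<open>The barrier function\<close>

definition barrier :: "real \<Rightarrow> 'a::euclidean_space \<Rightarrow> real \<Rightarrow> 'a \<Rightarrow> real" where
  "barrier \<alpha> y R x = exp (- \<alpha> * ((x - y) \<bullet> (x - y))) - exp (- \<alpha> * R\<^sup>2)"

lemma inner_diff_self_eq_dist: "(x - y) \<bullet> (x - y) = (dist y x)\<^sup>2"
  by (simp add: dist_norm power2_norm_eq_inner norm_minus_commute)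

lemma has_derivative_barrier:
  "(barrier \<alpha> y R has_derivative
     (\<lambda>v. exp (- \<alpha> * ((x - y) \<bullet> (x - y))) * (- \<alpha> * (2 * ((x - y) \<bullet> v))))) (at x)"
  unfolding barrier_def by (auto intro!: derivative_eq_intros simp: inner_commute algebra_simps)

lemma pd_barrier:
  "pd j (barrier \<alpha> y R) = (\<lambda>x. - 2 * \<alpha> * ((x - y) \<bullet> j) * exp (- \<alpha> * ((x - y) \<bullet> (x - y))))"
  by (rule ext, subst pd_eq_derivative[OF has_derivative_barrier]) (simp add: algebra_simps)

lemma has_derivative_pd_barrier:
  "(pd j (barrier \<alpha> y R) has_derivative
     (\<lambda>v. - 2 * \<alpha> * ((v \<bullet> j) * exp (- \<alpha> * ((x - y) \<bullet> (x - y)))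
        + ((x - y) \<bullet> j) * (exp (- \<alpha> * ((x - y) \<bullet> (x - y))) * (- \<alpha> * (2 * ((x - y) \<bullet> v))))))) (at x)"
  unfolding pd_barrier by (auto intro!: derivative_eq_intros simp: inner_commute algebra_simps)

lemma hessian_barrier:
  "hessian (barrier \<alpha> y R) x = (\<lambda>i j. exp (- \<alpha> * ((x - y) \<bullet> (x - y))) *
      (4 * \<alpha>\<^sup>2 * ((x - y) \<bullet> i) * ((x - y) \<bullet> j) - 2 * \<alpha> * (i \<bullet> j)))"
  unfolding hessian_def
  by (intro ext, subst pd_eq_derivative[OF has_derivative_pd_barrier])
    (simp add: algebra_simps power2_eq_square inner_commute)

lemma barrier_differentiable: "barrier \<alpha> y R differentiable (at x)"
  using has_derivative_barrier differentiableI by blast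

lemma pd_barrier_differentiable: "pd j (barrier \<alpha> y R) differentiable (at x)"
  using has_derivative_pd_barrier differentiableI by blast

lemma barrier_le_exp: "\<alpha> \<ge> 0 \<Longrightarrow> barrier \<alpha> y R x \<le> exp (- \<alpha> * (dist y x)\<^sup>2)"
  unfolding barrier_def inner_diff_self_eq_dist by simp

lemma barrier_le_1: "\<alpha> \<ge> 0 \<Longrightarrow> barrier \<alpha> y R x \<le> 1"
  using barrier_le_exp[of \<alpha> y R x] by (smt (verit) exp_le_one_iff mult_nonneg_nonneg
      zero_le_power2 minus_mult_left neg_le_0_iff_le)

lemma barrier_eq_0: "dist y x = R \<Longrightarrow> barrier \<alpha> y R x = 0"
  unfolding barrier_def inner_diff_self_eq_dist by simp

subsection \<open>Quasilinear operators\<close>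

definition quasilinear_op :: "(real \<Rightarrow> 'a \<Rightarrow> real) \<Rightarrow> (real \<Rightarrow> 'a \<Rightarrow> 'a) \<Rightarrow> (real \<Rightarrow> 'a \<Rightarrow> real)
    \<Rightarrow> real \<Rightarrow> 'a::euclidean_space \<Rightarrow> ('a \<Rightarrow> 'a \<Rightarrow> real) \<Rightarrow> real" where
  "quasilinear_op c q b z p N = c z p * principal_part (q z p) N + b z p"

definition in_box :: "real \<Rightarrow> real \<Rightarrow> real \<Rightarrow> real \<Rightarrow> 'a::euclidean_space \<Rightarrow> bool" where
  "in_box m M P z p \<longleftrightarrow> z \<in> {m..M} \<and> norm p \<le> P"

text \<open>\<open>Z\<close> is the range of values where the coefficients behave well, e.g. \<open>z > 0\<close> for the
  divergence-form operator.\<close>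

definition admissible :: "real set \<Rightarrow> (real \<Rightarrow> 'a \<Rightarrow> real) \<Rightarrow> (real \<Rightarrow> 'a \<Rightarrow> 'a)
    \<Rightarrow> (real \<Rightarrow> 'a::euclidean_space \<Rightarrow> real) \<Rightarrow> bool" where
  "admissible Z c q b \<longleftrightarrow> (\<forall>m\<in>Z. \<forall>M\<in>Z. \<forall>P Nb. \<exists>c0>0. \<exists>\<theta>>0. \<exists>L\<ge>0.
     (\<forall>z p. in_box m M P z p \<longrightarrow> c0 \<le> c z p \<and> (norm (q z p))\<^sup>2 \<le> 1 - \<theta>) \<and>
     (\<forall>z p z' p' N. in_box m M P z p \<longrightarrow> in_box m M P z' p' \<longrightarrow>
        (\<forall>i\<in>Basis. \<forall>j\<in>Basis. \<bar>N i j\<bar> \<le> Nb) \<longrightarrow>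
        \<bar>quasilinear_op c q b z p N - quasilinear_op c q b z' p' N\<bar> \<le> L * (\<bar>z - z'\<bar> + norm (p - p'))))"

subsection \<open>The Hopf boundary point lemma\<close>

text \<open>At a minimum of \<open>u' - \<epsilon> h - u\<close> the Hessian of the barrier \<open>h\<close> adds at least
  \<open>\<epsilon> E c\<^sub>0 (4 \<alpha>\<^sup>2 \<rho>\<^sup>2 \<theta> - 2 \<alpha> n)\<close> to the operator, while replacing \<open>(u', Du')\<close> by \<open>(u, Du)\<close>
  costs at most \<open>\<epsilon> E L (1 + 2 \<alpha> R)\<close>; for large \<open>\<alpha>\<close> the gain wins.\<close>

lemma barrier_hessian_contradiction:
  fixes d p1 p2 :: "'a::euclidean_space"
  assumes G: "quasilinear_op c q b a p1 N1 \<ge> quasilinear_op c q b a' p2 N2"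
    and c: "c a p1 \<ge> c0" "c0 > 0" and q: "(norm (q a p1))\<^sup>2 \<le> 1 - \<theta>" "\<theta> > 0"
    and lip: "\<bar>quasilinear_op c q b a p1 N2 - quasilinear_op c q b a' p2 N2\<bar>
      \<le> L * (\<bar>a - a'\<bar> + norm (p1 - p2))" "L \<ge> 0"
    and psd: "psd_form (\<lambda>i j. N2 i j - \<epsilon> * H i j - N1 i j)"
    and H: "H = (\<lambda>i j. E * (4 * \<alpha>\<^sup>2 * (d \<bullet> i) * (d \<bullet> j) - 2 * \<alpha> * (i \<bullet> j)))"
    and E: "E > 0" and \<alpha>: "\<alpha> \<ge> 0" and \<epsilon>: "\<epsilon> > 0" and \<rho>: "0 \<le> \<rho>" "\<rho> \<le> norm d" and R: "R \<ge> 0"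
    and close: "\<bar>a - a'\<bar> \<le> \<epsilon> * E" "norm (p1 - p2) \<le> \<epsilon> * (2 * \<alpha> * R * E)"
    and key: "c0 * (4 * \<alpha>\<^sup>2 * \<rho>\<^sup>2 * \<theta> - 2 * \<alpha> * DIM('a)) > L * (1 + 2 * \<alpha> * R)"
  shows False
proof -
  let ?A = "principal_part (q a p1)"
  define B where "B = 4 * \<alpha>\<^sup>2 * \<rho>\<^sup>2 * \<theta> - 2 * \<alpha> * DIM('a)"
  have "(norm (q a p1))\<^sup>2 \<le> 1\<^sup>2" using q by simp
  then have "norm (q a p1) \<le> 1" by (rule power2_le_imp_le) simp
  then have "?A (\<lambda>i j. N2 i j - \<epsilon> * H i j - N1 i j) \<ge> 0"
    using psd by (rule principal_part_nonneg[rotated])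
  then have A1: "?A N1 \<le> ?A N2 - \<epsilon> * ?A H"
    by (simp add: principal_part_diff principal_part_cmult)
  have AH: "?A H \<ge> E * B"
    unfolding H B_def using principal_part_barrier_hessian[OF _ \<alpha> q(1) _ \<rho>] E q(2) by simp
  have "0 \<le> L * (1 + 2 * \<alpha> * R)" using lip(2) \<alpha> R by simp
  then have "c0 * B > 0" using key by (simp add: B_def)
  then have B: "B > 0" using c(2) by (simp add: zero_less_mult_iff)
  have "\<epsilon> * (E * B) \<le> \<epsilon> * ?A H" using AH \<epsilon> by (intro mult_left_mono) auto
  with A1 have "?A N1 \<le> ?A N2 - \<epsilon> * (E * B)" by linarith
  then have "c a p1 * ?A N1 \<le> c a p1 * (?A N2 - \<epsilon> * (E * B))"
    using c by (intro mult_left_mono) auto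
  then have "c a p1 * ?A N1 \<le> c a p1 * ?A N2 - c a p1 * (\<epsilon> * E * B)"
    by (simp add: right_diff_distrib mult.assoc)
  moreover have "c0 * (\<epsilon> * E * B) \<le> c a p1 * (\<epsilon> * E * B)"
    using c \<epsilon> E B by (intro mult_right_mono) auto
  moreover have "L * (\<bar>a - a'\<bar> + norm (p1 - p2)) \<le> L * (\<epsilon> * E + \<epsilon> * (2 * \<alpha> * R * E))"
    using close lip(2) by (intro mult_left_mono) auto
  moreover have "(\<epsilon> * E) * (L * (1 + 2 * \<alpha> * R)) < (\<epsilon> * E) * (c0 * B)"
    using key \<epsilon> E unfolding B_def by (intro mult_strict_left_mono) auto
  moreover have "L * (\<epsilon> * E + \<epsilon> * (2 * \<alpha> * R * E)) = (\<epsilon> * E) * (L * (1 + 2 * \<alpha> * R))"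
    by (simp add: algebra_simps)
  moreover have "c0 * (\<epsilon> * E * B) = (\<epsilon> * E) * (c0 * B)" by (simp add: algebra_simps)
  ultimately show False
    using G lip(1) unfolding quasilinear_op_def abs_le_iff by linarith
qed

lemma exists_barrier_exponent:
  fixes c0 \<rho> \<theta> L R n :: real
  assumes "c0 > 0" "\<rho> > 0" "\<theta> > 0" "L \<ge> 0" "R \<ge> 0" "n \<ge> 0"
  shows "\<exists>\<alpha>\<ge>1. c0 * (4 * \<alpha>\<^sup>2 * \<rho>\<^sup>2 * \<theta> - 2 * \<alpha> * n) > L * (1 + 2 * \<alpha> * R)"
proof -
  define k where "k = 4 * c0 * \<rho>\<^sup>2 * \<theta>"
  have k: "k > 0" using assms unfolding k_def by simp
  define \<alpha> where "\<alpha> = max 1 ((2 * c0 * n + L + 2 * L * R) / k + 1)"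
  have \<alpha>: "\<alpha> \<ge> 1" unfolding \<alpha>_def by simp
  have "(2 * c0 * n + L + 2 * L * R) / k < \<alpha>" unfolding \<alpha>_def by simp
  then have "2 * c0 * n + L + 2 * L * R < k * \<alpha>" using k by (simp add: divide_less_eq mult.commute)
  then have "(2 * c0 * n + L + 2 * L * R) * \<alpha> < (k * \<alpha>) * \<alpha>"
    using \<alpha> by (intro mult_strict_right_mono) auto
  moreover have "L \<le> L * \<alpha>" using \<alpha> assms by (metis mult_le_cancel_left1 not_less)
  ultimately have "c0 * (4 * \<alpha>\<^sup>2 * \<rho>\<^sup>2 * \<theta> - 2 * \<alpha> * n) > L * (1 + 2 * \<alpha> * R)"
    unfolding k_def by (simp add: power2_eq_square algebra_simps)
  with \<alpha> show ?thesis by blast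
qed

lemma hopf_interior_min_contradiction:
  fixes u u' :: "'a::euclidean_space \<Rightarrow> real" and \<alpha> \<epsilon> R :: real and y0 :: 'a
  defines "\<psi> \<equiv> \<lambda>x. u' x - \<epsilon> * barrier \<alpha> y0 R x - u x"
  assumes U: "open U" and Cu: "C2_on U u" and Cu': "C2_on U u'"
    and S: "open S" "p \<in> S" "S \<subseteq> U" and min: "\<forall>y\<in>S. \<psi> p \<le> \<psi> y" and neg: "\<psi> p < 0"
    and le: "u p \<le> u' p" and dist: "\<rho> \<le> dist y0 p" "dist y0 p \<le> R"
    and G: "quasilinear_op c q b (u p) (grad u p) (hessian u p)
      \<ge> quasilinear_op c q b (u' p) (grad u' p) (hessian u' p)"
    and c: "c (u p) (grad u p) \<ge> c0" "c0 > 0"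
    and q: "(norm (q (u p) (grad u p)))\<^sup>2 \<le> 1 - \<theta>" "\<theta> > 0"
    and lip: "\<bar>quasilinear_op c q b (u p) (grad u p) (hessian u' p)
        - quasilinear_op c q b (u' p) (grad u' p) (hessian u' p)\<bar>
      \<le> L * (\<bar>u p - u' p\<bar> + norm (grad u p - grad u' p))" "L \<ge> 0"
    and \<alpha>: "\<alpha> \<ge> 0" and \<epsilon>: "\<epsilon> > 0" and \<rho>: "\<rho> \<ge> 0"
    and key: "c0 * (4 * \<alpha>\<^sup>2 * \<rho>\<^sup>2 * \<theta> - 2 * \<alpha> * DIM('a)) > L * (1 + 2 * \<alpha> * R)"
  shows False
proof -
  define d where "d = p - y0"
  define E where "E = exp (- \<alpha> * (d \<bullet> d))"
  have pU: "p \<in> U" using S by blast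
  note perturbed = C2_perturbed_differentiable C2_perturbed_pd C2_perturbed_pd_differentiable
    C2_perturbed_hessian
  note perturbed = perturbed[where g = "barrier \<alpha> y0 R" and c = \<epsilon>,
      OF U Cu Cu' barrier_differentiable pd_barrier_differentiable, folded \<psi>_def]
  have "0 \<le> (\<Sum>i\<in>Basis. \<Sum>j\<in>Basis. (v \<bullet> i) * (v \<bullet> j) * pd i (pd j \<psi>) p)" for v
    by (rule hessian_form_nonneg_at_min[OF S(1,2) min]) (use perturbed(1,3) S pU in auto)
  then have "psd_form (\<lambda>i j. hessian \<psi> p i j)"
    unfolding psd_form_def bform_def hessian_def by simp
  then have psd: "psd_form (\<lambda>i j. hessian u' p i j - \<epsilon> * hessian (barrier \<alpha> y0 R) p i j - hessian u p i j)"
  proof -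
    have "bform (\<lambda>i j. hessian \<psi> p i j) v v
        = bform (\<lambda>i j. hessian u' p i j - \<epsilon> * hessian (barrier \<alpha> y0 R) p i j - hessian u p i j) v v"
      for v by (rule bform_cong) (simp add: perturbed(4)[OF pU])
    with \<open>psd_form (\<lambda>i j. hessian \<psi> p i j)\<close> show ?thesis by (simp add: psd_form_def)
  qed
  have "pd j \<psi> p = 0" if "j \<in> Basis" for j
    using pd_eq_0_at_min[OF S(1,2) min] perturbed(1) S that by blast
  then have grad_eq: "pd j u p - pd j u' p = - \<epsilon> * pd j (barrier \<alpha> y0 R) p" if "j \<in> Basis" for j
    using perturbed(2)[OF pU, of j] that by simp
  have "u' p - u p < \<epsilon> * barrier \<alpha> y0 R p" using neg by (simp add: \<psi>_def)
  also have "\<dots> \<le> \<epsilon> * E"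
    using barrier_le_exp[OF \<alpha>, of y0 R p] \<epsilon>
    by (simp add: E_def d_def inner_diff_self_eq_dist dist_commute)
  finally have close_val: "\<bar>u p - u' p\<bar> \<le> \<epsilon> * E" using le by simp
  have "pd i u p - pd i u' p = (2 * \<alpha> * \<epsilon> * E) * (d \<bullet> i)" if "i \<in> Basis" for i
    using grad_eq[OF that] unfolding pd_barrier d_def[symmetric] E_def[symmetric]
    by (simp add: algebra_simps)
  then have "grad u p - grad u' p = (\<Sum>i\<in>Basis. (2 * \<alpha> * \<epsilon> * E) *\<^sub>R ((d \<bullet> i) *\<^sub>R i))"
    unfolding grad_diff by (intro sum.cong) simp_all
  also have "\<dots> = (2 * \<alpha> * \<epsilon> * E) *\<^sub>R d"
    by (simp only: scaleR_sum_right[symmetric] euclidean_representation)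
  finally have "norm (grad u p - grad u' p) = (2 * \<alpha> * \<epsilon> * E) * norm d"
    using \<alpha> \<epsilon> by (simp add: E_def)
  also have "\<dots> \<le> (2 * \<alpha> * \<epsilon> * E) * R"
    using dist \<alpha> \<epsilon> by (intro mult_left_mono) (auto simp: E_def d_def dist_norm norm_minus_commute)
  finally have close_grad: "norm (grad u p - grad u' p) \<le> \<epsilon> * (2 * \<alpha> * R * E)"
    by (simp add: algebra_simps)
  show False
  proof (rule barrier_hessian_contradiction[OF G c q lip psd _ _ \<alpha> \<epsilon> \<rho> _ _ close_val close_grad key])
    show "hessian (barrier \<alpha> y0 R) p = (\<lambda>i j. E * (4 * \<alpha>\<^sup>2 * (d \<bullet> i) * (d \<bullet> j) - 2 * \<alpha> * (i \<bullet> j)))"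
      by (simp add: hessian_barrier E_def d_def)
    show "E > 0" "\<rho> \<le> norm d" "R \<ge> 0"
      using dist \<rho> by (auto simp: E_def d_def dist_norm norm_minus_commute)
  qed
qed

lemma perturbed_difference_nonneg_on_annulus:
  fixes u u' :: "'a::euclidean_space \<Rightarrow> real" and \<alpha> \<epsilon> R :: real and y0 :: 'a
  defines "\<psi> \<equiv> \<lambda>x. u' x - \<epsilon> * barrier \<alpha> y0 R x - u x"
  assumes U: "open U" and Cu: "C2_on U u" and Cu': "C2_on U u'" and le: "\<forall>y\<in>U. u y \<le> u' y"
    and ball: "cball y0 R \<subseteq> U" and \<rho>: "0 < \<rho>" "\<rho> < R"
    and inner: "\<forall>z\<in>sphere y0 \<rho>. \<epsilon> \<le> u' z - u z" and \<epsilon>: "\<epsilon> > 0" and \<alpha>: "\<alpha> \<ge> 0"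
    and ineq: "\<forall>y\<in>U. quasilinear_op c q b (u y) (grad u y) (hessian u y)
      \<ge> quasilinear_op c q b (u' y) (grad u' y) (hessian u' y)"
    and at_points: "\<And>p. p \<in> cball y0 R \<Longrightarrow>
      c0 \<le> c (u p) (grad u p) \<and> (norm (q (u p) (grad u p)))\<^sup>2 \<le> 1 - \<theta> \<and>
      \<bar>quasilinear_op c q b (u p) (grad u p) (hessian u' p)
        - quasilinear_op c q b (u' p) (grad u' p) (hessian u' p)\<bar>
        \<le> L * (\<bar>u p - u' p\<bar> + norm (grad u p - grad u' p))"
    and constants: "c0 > 0" "\<theta> > 0" "L \<ge> 0"
    and key: "c0 * (4 * \<alpha>\<^sup>2 * \<rho>\<^sup>2 * \<theta> - 2 * \<alpha> * DIM('a)) > L * (1 + 2 * \<alpha> * R)"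
  shows "\<forall>z\<in>cball y0 R - ball y0 \<rho>. \<psi> z \<ge> 0"
proof (rule ccontr)
  let ?A = "cball y0 R - ball y0 \<rho>"
  assume "\<not> (\<forall>z\<in>?A. \<psi> z \<ge> 0)"
  then obtain z1 where z1: "z1 \<in> ?A" "\<psi> z1 < 0" by force
  have AU: "?A \<subseteq> U" using ball by blast
  have "continuous_on U \<psi>"
    using C2_perturbed_differentiable[OF U Cu Cu' barrier_differentiable pd_barrier_differentiable]
    unfolding \<psi>_def by (meson continuous_at_imp_continuous_on differentiable_imp_continuous_within)
  then obtain p where p: "p \<in> ?A" "\<forall>z\<in>?A. \<psi> p \<le> \<psi> z"
    using continuous_attains_inf[of ?A \<psi>] z1 AU by (metis compact_cball compact_diff open_ball
        continuous_on_subset empty_iff)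
  have neg: "\<psi> p < 0" using p z1 by force
  have pU: "p \<in> U" using p AU by blast
  have "dist y0 p \<noteq> R"
  proof
    assume "dist y0 p = R"
    then have "\<psi> p = u' p - u p" by (simp add: \<psi>_def barrier_eq_0)
    with le pU neg show False by auto
  qed
  moreover have "dist y0 p \<noteq> \<rho>"
  proof
    assume "dist y0 p = \<rho>"
    then have "\<epsilon> \<le> u' p - u p" using inner by simp
    moreover have "\<epsilon> * barrier \<alpha> y0 R p \<le> \<epsilon>"
      using barrier_le_1[OF \<alpha>] \<epsilon> by (simp add: mult_left_le)
    ultimately show False using neg by (simp add: \<psi>_def)
  qed
  ultimately have pS: "p \<in> ball y0 R - cball y0 \<rho>" using p by auto
  show False
  proof (rule hopf_interior_min_contradiction[of U u u' "ball y0 R - cball y0 \<rho>" p \<epsilon> \<alpha> y0 R \<rho>])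
    show "open (ball y0 R - cball y0 \<rho>)" "ball y0 R - cball y0 \<rho> \<subseteq> U"
      using ball by auto
    show "\<forall>y\<in>ball y0 R - cball y0 \<rho>. u' p - \<epsilon> * barrier \<alpha> y0 R p - u p
        \<le> u' y - \<epsilon> * barrier \<alpha> y0 R y - u y"
      using p(2) unfolding \<psi>_def by auto
    show "\<rho> \<le> dist y0 p" "dist y0 p \<le> R" using p by auto
  qed (use U Cu Cu' pS neg[unfolded \<psi>_def] le pU ineq at_points[of p] p constants \<alpha> \<epsilon> \<rho> key in auto)
qed

lemma perturbed_difference_negative_inside:
  fixes u u' :: "'a::euclidean_space \<Rightarrow> real" and \<alpha> \<epsilon> R :: real and y0 :: 'a
  defines "\<psi> \<equiv> \<lambda>x. u' x - \<epsilon> * barrier \<alpha> y0 R x - u x"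
  assumes U: "open U" and Cu: "C2_on U u" and Cu': "C2_on U u'" and le: "\<forall>y\<in>U. u y \<le> u' y"
    and x0: "x0 \<in> U" "u x0 = u' x0" "dist y0 x0 = R"
    and R: "R > 0" and \<alpha>: "\<alpha> > 0" and \<epsilon>: "\<epsilon> > 0"
  shows "\<exists>t>0. \<forall>s. 0 < s \<longrightarrow> s < t \<longrightarrow> \<psi> (x0 + s *\<^sub>R (y0 - x0)) < 0"
proof -
  define E where "E = exp (- \<alpha> * ((x0 - y0) \<bullet> (x0 - y0)))"
  note du = C2_on_differentiable[OF Cu x0(1)] and du' = C2_on_differentiable[OF Cu' x0(1)]
  have "pd j (\<lambda>z. u' z - u z) x0 = 0" if "j \<in> Basis" for j
    using le x0 du du' that by (intro pd_eq_0_at_min[OF U x0(1)]) auto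
  then have pd_eq: "pd j u' x0 = pd j u x0" if "j \<in> Basis" for j
    using pd_diff[OF du' du] that by simp
  have pd\<psi>: "pd j \<psi> x0 = 2 * \<alpha> * \<epsilon> * E * ((x0 - y0) \<bullet> j)" if "j \<in> Basis" for j
  proof -
    have "pd j \<psi> x0 = pd j u' x0 - \<epsilon> * pd j (barrier \<alpha> y0 R) x0 - pd j u x0"
      unfolding \<psi>_def
      by (rule C2_perturbed_pd[OF U Cu Cu' barrier_differentiable pd_barrier_differentiable x0(1)])
    with pd_eq[OF that] show ?thesis
      unfolding pd_barrier E_def[symmetric] by (simp add: algebra_simps)
  qed
  define D where "D = (\<Sum>j\<in>Basis. ((y0 - x0) \<bullet> j) * pd j \<psi> (x0 + 0 *\<^sub>R (y0 - x0)))"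
  have "((\<lambda>t. \<psi> (x0 + t *\<^sub>R (y0 - x0))) has_real_derivative D) (at 0)"
    unfolding D_def using C2_perturbed_differentiable[OF U Cu Cu' barrier_differentiable
        pd_barrier_differentiable x0(1)]
    by (intro has_real_derivative_line) (simp add: \<psi>_def)
  moreover have "D = - (2 * \<alpha> * \<epsilon> * E * R\<^sup>2)"
  proof -
    have "D = 2 * \<alpha> * \<epsilon> * E * (\<Sum>j\<in>Basis. ((y0 - x0) \<bullet> j) * ((x0 - y0) \<bullet> j))"
      unfolding D_def sum_distrib_left by (intro sum.cong) (simp_all add: pd\<psi>)
    also have "\<dots> = 2 * \<alpha> * \<epsilon> * E * ((y0 - x0) \<bullet> (x0 - y0))"
      by (simp only: euclidean_inner[symmetric])
    also have "(y0 - x0) \<bullet> (x0 - y0) = - R\<^sup>2"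
      by (metis inner_minus_left minus_diff_eq inner_diff_self_eq_dist x0(3))
    finally show ?thesis by simp
  qed
  moreover have "2 * \<alpha> * \<epsilon> * E * R\<^sup>2 > 0" using \<alpha> \<epsilon> R by (simp add: E_def)
  moreover have "\<psi> x0 = 0" using x0 by (simp add: \<psi>_def barrier_eq_0)
  ultimately show ?thesis
    using DERIV_neg_dec_right[of "\<lambda>t. \<psi> (x0 + t *\<^sub>R (y0 - x0))" D 0] by auto
qed

lemma C2_bounds_on_compact:
  fixes u u' :: "'a::euclidean_space \<Rightarrow> real"
  assumes K: "compact K" "K \<noteq> {}" "K \<subseteq> U" and Cu: "C2_on U u" and Cu': "C2_on U u'"
    and le: "\<forall>y\<in>U. u y \<le> u' y"
  obtains m M P Nb where "m \<in> u ` K" "M \<in> u' ` K"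
    "\<And>z. z \<in> K \<Longrightarrow> in_box m M P (u z) (grad u z) \<and> in_box m M P (u' z) (grad u' z)"
    "\<And>z i j. z \<in> K \<Longrightarrow> i \<in> Basis \<Longrightarrow> j \<in> Basis \<Longrightarrow> \<bar>hessian u' z i j\<bar> \<le> Nb"
proof -
  note cu = C2_on_continuous_on[OF Cu] and cu' = C2_on_continuous_on[OF Cu']
  obtain pm where pm: "pm \<in> K" "\<forall>z\<in>K. u pm \<le> u z"
    using continuous_attains_inf[OF K(1,2) continuous_on_subset[OF cu(1) K(3)]] by blast
  obtain pM where pM: "pM \<in> K" "\<forall>z\<in>K. u' z \<le> u' pM"
    using continuous_attains_sup[OF K(1,2) continuous_on_subset[OF cu'(1) K(3)]] by blast
  have "continuous_on K (\<lambda>z. norm (grad u z) + norm (grad u' z))"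
    using K(3) cu(2) cu'(2)
    by (intro continuous_intros continuous_on_grad) (auto intro: continuous_on_subset)
  then obtain P where P: "\<And>z. z \<in> K \<Longrightarrow> norm (grad u z) + norm (grad u' z) \<le> P"
    using continuous_attains_sup[OF K(1,2)] by blast
  have "continuous_on K (\<lambda>z. \<Sum>i\<in>Basis. \<Sum>j\<in>Basis. \<bar>hessian u' z i j\<bar>)"
    unfolding hessian_def using K(3)
    by (intro continuous_intros continuous_on_subset[OF cu'(3)]) auto
  then obtain Nb where Nb: "\<And>z. z \<in> K \<Longrightarrow> (\<Sum>i\<in>Basis. \<Sum>j\<in>Basis. \<bar>hessian u' z i j\<bar>) \<le> Nb"
    using continuous_attains_sup[OF K(1,2)] by blast
  show ?thesis
  proof
    show "u pm \<in> u ` K" "u' pM \<in> u' ` K" using pm pM by auto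
    fix z assume z: "z \<in> K"
    have "u pm \<le> u z" "u z \<le> u' z" "u' z \<le> u' pM" using pm(2) le K(3) pM(2) z by auto
    moreover have "norm (grad u z) \<le> P" "norm (grad u' z) \<le> P"
      using P[OF z] norm_ge_zero[of "grad u z"] norm_ge_zero[of "grad u' z"] by linarith+
    ultimately show "in_box (u pm) (u' pM) P (u z) (grad u z) \<and> in_box (u pm) (u' pM) P (u' z) (grad u' z)"
      unfolding in_box_def by auto
    fix i j :: 'a assume i: "i \<in> Basis" and j: "j \<in> Basis"
    have "\<bar>hessian u' z i j\<bar> \<le> (\<Sum>j\<in>Basis. \<bar>hessian u' z i j\<bar>)"
      by (rule member_le_sum) (use j in auto)
    also have "\<dots> \<le> (\<Sum>i\<in>Basis. \<Sum>j\<in>Basis. \<bar>hessian u' z i j\<bar>)"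
      by (rule member_le_sum) (use i in \<open>auto intro: sum_nonneg\<close>)
    also have "\<dots> \<le> Nb" by (rule Nb[OF z])
    finally show "\<bar>hessian u' z i j\<bar> \<le> Nb" .
  qed
qed

lemma admissible_constants_on_compact:
  fixes u u' :: "'a::euclidean_space \<Rightarrow> real"
  assumes K: "compact K" "K \<noteq> {}" "K \<subseteq> U" and Cu: "C2_on U u" and Cu': "C2_on U u'"
    and le: "\<forall>y\<in>U. u y \<le> u' y" and range: "\<forall>y\<in>U. u y \<in> Z \<and> u' y \<in> Z"
    and adm: "admissible Z c q b"
  obtains c0 \<theta> L where "c0 > 0" "\<theta> > 0" "L \<ge> 0"
    "\<And>p. p \<in> K \<Longrightarrow>
      c0 \<le> c (u p) (grad u p) \<and> (norm (q (u p) (grad u p)))\<^sup>2 \<le> 1 - \<theta> \<and>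
      \<bar>quasilinear_op c q b (u p) (grad u p) (hessian u' p)
        - quasilinear_op c q b (u' p) (grad u' p) (hessian u' p)\<bar>
        \<le> L * (\<bar>u p - u' p\<bar> + norm (grad u p - grad u' p))"
proof -
  obtain m M P Nb where mM: "m \<in> u ` K" "M \<in> u' ` K"
    and box: "\<And>z. z \<in> K \<Longrightarrow> in_box m M P (u z) (grad u z) \<and> in_box m M P (u' z) (grad u' z)"
    and Nb: "\<And>z i j. z \<in> K \<Longrightarrow> i \<in> Basis \<Longrightarrow> j \<in> Basis \<Longrightarrow> \<bar>hessian u' z i j\<bar> \<le> Nb"
    using C2_bounds_on_compact[OF K Cu Cu' le] by blast
  have "m \<in> Z" "M \<in> Z" using mM K(3) range by auto
  note adm[unfolded admissible_def, rule_format, OF this, of P Nb]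
  then obtain c0 \<theta> L where constants: "c0 > 0" "\<theta> > 0" "L \<ge> 0"
    and ell: "\<And>z p. in_box m M P z p \<Longrightarrow> c0 \<le> c z p \<and> (norm (q z p))\<^sup>2 \<le> 1 - \<theta>"
    and lip: "\<And>z p z' p' N. in_box m M P z p \<Longrightarrow> in_box m M P z' p' \<Longrightarrow>
      \<forall>i\<in>Basis. \<forall>j\<in>Basis. \<bar>N i j\<bar> \<le> Nb \<Longrightarrow>
      \<bar>quasilinear_op c q b z p N - quasilinear_op c q b z' p' N\<bar> \<le> L * (\<bar>z - z'\<bar> + norm (p - p'))"
    by blast
  show ?thesis
  proof (rule that[OF constants])
    fix p assume p: "p \<in> K"
    have in_box: "in_box m M P (u p) (grad u p)" "in_box m M P (u' p) (grad u' p)"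
      using box[OF p] by auto
    have "\<forall>i\<in>Basis. \<forall>j\<in>Basis. \<bar>hessian u' p i j\<bar> \<le> Nb" using Nb[OF p] by blast
    with ell[OF in_box(1)] lip[OF in_box] show "c0 \<le> c (u p) (grad u p) \<and>
      (norm (q (u p) (grad u p)))\<^sup>2 \<le> 1 - \<theta> \<and>
      \<bar>quasilinear_op c q b (u p) (grad u p) (hessian u' p)
        - quasilinear_op c q b (u' p) (grad u' p) (hessian u' p)\<bar>
        \<le> L * (\<bar>u p - u' p\<bar> + norm (grad u p - grad u' p))"
      by blast
  qed
qed

lemma hopf_boundary_point:
  fixes u u' :: "'a::euclidean_space \<Rightarrow> real"
  assumes U: "open U" and Cu: "C2_on U u" and Cu': "C2_on U u'"
    and ineq: "\<forall>y\<in>U. quasilinear_op c q b (u y) (grad u y) (hessian u y)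
      \<ge> quasilinear_op c q b (u' y) (grad u' y) (hessian u' y)"
    and le: "\<forall>y\<in>U. u y \<le> u' y" and range: "\<forall>y\<in>U. u y \<in> Z \<and> u' y \<in> Z"
    and adm: "admissible Z c q b"
    and R: "R > 0" "cball y0 R \<subseteq> U" and pos: "\<forall>z\<in>ball y0 R. u z < u' z"
    and x0: "dist y0 x0 = R" "u x0 = u' x0"
  shows False
proof -
  have "cball y0 R \<noteq> {}" using R(1) by auto
  then obtain c0 \<theta> L where constants: "c0 > 0" "\<theta> > 0" "L \<ge> 0"
    and at_points: "\<And>p. p \<in> cball y0 R \<Longrightarrow>
      c0 \<le> c (u p) (grad u p) \<and> (norm (q (u p) (grad u p)))\<^sup>2 \<le> 1 - \<theta> \<and>
      \<bar>quasilinear_op c q b (u p) (grad u p) (hessian u' p)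
        - quasilinear_op c q b (u' p) (grad u' p) (hessian u' p)\<bar>
        \<le> L * (\<bar>u p - u' p\<bar> + norm (grad u p - grad u' p))"
    using admissible_constants_on_compact[OF compact_cball _ R(2) Cu Cu' le range adm] by blast
  define \<rho> where "\<rho> = R / 2"
  have \<rho>: "0 < \<rho>" "\<rho> < R" using R by (auto simp: \<rho>_def)
  have sphere: "sphere y0 \<rho> \<subseteq> ball y0 R" "sphere y0 \<rho> \<noteq> {}" using \<rho> by auto
  have "sphere y0 \<rho> \<subseteq> U" using sphere(1) R(2) ball_subset_cball by blast
  then have "continuous_on (sphere y0 \<rho>) (\<lambda>z. u' z - u z)"
    using C2_on_continuous_on(1)[OF Cu] C2_on_continuous_on(1)[OF Cu']
    by (intro continuous_intros) (auto intro: continuous_on_subset)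
  then obtain pmin where pmin: "pmin \<in> sphere y0 \<rho>" "\<forall>z\<in>sphere y0 \<rho>. u' pmin - u pmin \<le> u' z - u z"
    using continuous_attains_inf[OF compact_sphere sphere(2)] by blast
  define \<epsilon> where "\<epsilon> = u' pmin - u pmin"
  have \<epsilon>: "\<epsilon> > 0" "\<forall>z\<in>sphere y0 \<rho>. \<epsilon> \<le> u' z - u z"
    using pmin sphere(1) pos unfolding \<epsilon>_def by auto
  obtain \<alpha> where \<alpha>: "\<alpha> \<ge> 1" "c0 * (4 * \<alpha>\<^sup>2 * \<rho>\<^sup>2 * \<theta> - 2 * \<alpha> * DIM('a)) > L * (1 + 2 * \<alpha> * R)"
    using exists_barrier_exponent[OF constants(1) \<rho>(1) constants(2,3), of R "real DIM('a)"] R by auto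
  define \<psi> where "\<psi> = (\<lambda>x. u' x - \<epsilon> * barrier \<alpha> y0 R x - u x)"
  have annulus: "\<forall>z\<in>cball y0 R - ball y0 \<rho>. \<psi> z \<ge> 0"
    unfolding \<psi>_def
    by (rule perturbed_difference_nonneg_on_annulus[OF U Cu Cu' le R(2) \<rho> \<epsilon>(2,1) _
        ineq at_points constants \<alpha>(2)]) (use \<alpha>(1) in auto)
  have x0U: "x0 \<in> U" using x0(1) R(2) by auto
  have "\<exists>t>0. \<forall>s. 0 < s \<longrightarrow> s < t \<longrightarrow> \<psi> (x0 + s *\<^sub>R (y0 - x0)) < 0"
    unfolding \<psi>_def
    by (rule perturbed_difference_negative_inside[OF U Cu Cu' le x0U x0(2,1) R(1)])
      (use \<alpha>(1) \<epsilon>(1) in auto)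
  then obtain t where t: "t > 0" "\<And>s. 0 < s \<Longrightarrow> s < t \<Longrightarrow> \<psi> (x0 + s *\<^sub>R (y0 - x0)) < 0"
    by blast
  define s where "s = min (t / 2) (1 / 2)"
  have s: "0 < s" "s < t" "s \<le> 1 / 2" using t by (auto simp: s_def)
  have "y0 - (x0 + s *\<^sub>R (y0 - x0)) = (1 - s) *\<^sub>R (y0 - x0)" by (simp add: algebra_simps)
  then have "dist y0 (x0 + s *\<^sub>R (y0 - x0)) = (1 - s) * R"
    using s x0(1) by (simp add: dist_norm)
  then have "x0 + s *\<^sub>R (y0 - x0) \<in> cball y0 R - ball y0 \<rho>"
    using s R(1) by (auto simp: \<rho>_def mult_left_le_one_le)
  then have "\<psi> (x0 + s *\<^sub>R (y0 - x0)) \<ge> 0" using annulus by blast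
  with t(2)[OF s(1,2)] show False by linarith
qed

subsection \<open>The strong comparison principle\<close>

lemma contact_set_open:
  fixes u u' :: "'a::euclidean_space \<Rightarrow> real"
  assumes U: "open U" and cont: "continuous_on U (\<lambda>z. u' z - u z)" and le: "\<forall>y\<in>U. u y \<le> u' y"
    and no_touching: "\<And>y0 R x0. R > 0 \<Longrightarrow> cball y0 R \<subseteq> U \<Longrightarrow> \<forall>z\<in>ball y0 R. u z < u' z \<Longrightarrow>
      dist y0 x0 = R \<Longrightarrow> u x0 = u' x0 \<Longrightarrow> False"
  shows "open {z\<in>U. u z = u' z}"
proof (rule openI)
  fix x1 assume x1: "x1 \<in> {z\<in>U. u z = u' z}"
  obtain e where e: "e > 0" "cball x1 e \<subseteq> U" using U x1 open_contains_cball by blast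
  define r where "r = e / 2"
  have r: "r > 0" "cball x1 (2 * r) \<subseteq> U" using e by (auto simp: r_def)
  have "ball x1 r \<subseteq> {z\<in>U. u z = u' z}"
  proof (rule subsetI, rule ccontr)
    fix y assume y: "y \<in> ball x1 r" and yn: "y \<notin> {z\<in>U. u z = u' z}"
    define T where "T = {z \<in> cball x1 (2 * r). u' z - u z = 0}"
    have "closed T"
      unfolding T_def using continuous_on_subset[OF cont r(2)]
      by (intro continuous_closed_preimage_constant) auto
    moreover have x1T: "x1 \<in> T" using x1 r by (simp add: T_def)
    ultimately obtain x0 where x0: "x0 \<in> T" "\<And>z. z \<in> T \<Longrightarrow> dist y x0 \<le> dist y z"
      using distance_attains_inf by blast
    define R where "R = dist y x0"
    have x0U: "x0 \<in> U" "u x0 = u' x0" using x0(1) r(2) by (auto simp: T_def)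
    have "y \<in> U" using y r by (auto simp: dist_commute)
    then have "y \<noteq> x0" using yn x0U by auto
    then have "R > 0" by (simp add: R_def)
    have "R < r" using x0(2)[OF x1T] y by (simp add: R_def dist_commute)
    have ball_T: "cball y R \<subseteq> cball x1 (2 * r)"
    proof
      fix z assume "z \<in> cball y R"
      then have "dist x1 z \<le> dist x1 y + dist y z" "dist y z \<le> R" "dist x1 y < r"
        using y by (auto intro: dist_triangle)
      with \<open>R < r\<close> show "z \<in> cball x1 (2 * r)" by simp
    qed
    have pos: "\<forall>z\<in>ball y R. u z < u' z"
    proof
      fix z assume z: "z \<in> ball y R"
      have "z \<notin> T" using x0(2) z by (fastforce simp: R_def)
      moreover have "z \<in> cball x1 (2 * r)" by (rule subsetD[OF ball_T subsetD[OF ball_subset_cball z]])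
      ultimately have "u z \<noteq> u' z" by (simp add: T_def)
      moreover have "u z \<le> u' z" using le r(2) \<open>z \<in> cball x1 (2 * r)\<close> by blast
      ultimately show "u z < u' z" by linarith
    qed
    have "cball y R \<subseteq> U" using ball_T r(2) by (rule order_trans)
    moreover have "dist y x0 = R" by (simp add: R_def)
    ultimately show False by (rule no_touching[OF \<open>R > 0\<close> _ pos _ x0U(2)])
  qed
  with r show "\<exists>e>0. ball x1 e \<subseteq> {z\<in>U. u z = u' z}" by blast
qed

theorem strong_comparison_principle:
  fixes u u' :: "'a::euclidean_space \<Rightarrow> real"
  assumes U: "open U" "connected U" and Cu: "C2_on U u" and Cu': "C2_on U u'"
    and ineq: "\<forall>y\<in>U. quasilinear_op c q b (u y) (grad u y) (hessian u y)
      \<ge> quasilinear_op c q b (u' y) (grad u' y) (hessian u' y)"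
    and le: "\<forall>y\<in>U. u y \<le> u' y" and range: "\<forall>y\<in>U. u y \<in> Z \<and> u' y \<in> Z"
    and adm: "admissible Z c q b"
    and x: "x \<in> U" "u x = u' x"
  shows "\<forall>y\<in>U. u y = u' y"
proof -
  have cont: "continuous_on U (\<lambda>z. u' z - u z)"
    using C2_on_continuous_on(1)[OF Cu] C2_on_continuous_on(1)[OF Cu'] by (intro continuous_intros)
  have "open {z\<in>U. u z = u' z}"
    using hopf_boundary_point[OF U(1) Cu Cu' ineq le range adm]
    by (intro contact_set_open[OF U(1) cont le]) blast
  moreover have "open {z\<in>U. u' z - u z > 0}"
    using continuous_open_preimage[OF cont U(1), of "{0<..}"] by (simp add: vimage_def Int_def)
  moreover have "U \<subseteq> {z\<in>U. u z = u' z} \<union> {z\<in>U. u' z - u z > 0}" using le by force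
  moreover have "{z\<in>U. u z = u' z} \<inter> {z\<in>U. u' z - u z > 0} \<inter> U = {}" by auto
  moreover have "{z\<in>U. u z = u' z} \<inter> U \<noteq> {}" using x by auto
  ultimately have "{z\<in>U. u' z - u z > 0} \<inter> U = {}"
    using connectedD[OF U(2)] by blast
  then show ?thesis using le by force
qed

subsection \<open>Coefficients that are bounded and Lipschitz on boxes\<close>

definition lip_bounded :: "real \<Rightarrow> real \<Rightarrow> real \<Rightarrow> (real \<Rightarrow> 'a::euclidean_space \<Rightarrow> real) \<Rightarrow> bool" where
  "lip_bounded m M P f \<longleftrightarrow> (\<exists>K. \<forall>z p. in_box m M P z p \<longrightarrow> \<bar>f z p\<bar> \<le> K) \<and>
     (\<exists>L. \<forall>z p z' p'. in_box m M P z p \<longrightarrow> in_box m M P z' p' \<longrightarrow>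
        \<bar>f z p - f z' p'\<bar> \<le> L * (\<bar>z - z'\<bar> + norm (p - p')))"

lemma lip_boundedI:
  assumes "\<And>z p. in_box m M P z p \<Longrightarrow> \<bar>f z p\<bar> \<le> K"
    and "\<And>z p z' p'. in_box m M P z p \<Longrightarrow> in_box m M P z' p' \<Longrightarrow>
      \<bar>f z p - f z' p'\<bar> \<le> L * (\<bar>z - z'\<bar> + norm (p - p'))"
  shows "lip_bounded m M P f"
  unfolding lip_bounded_def using assms by blast

lemma lip_boundedE:
  assumes "lip_bounded m M P f"
  obtains K L where "K \<ge> 0" "L \<ge> 0" "\<And>z p. in_box m M P z p \<Longrightarrow> \<bar>f z p\<bar> \<le> K"
    "\<And>z p z' p'. in_box m M P z p \<Longrightarrow> in_box m M P z' p' \<Longrightarrow>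
      \<bar>f z p - f z' p'\<bar> \<le> L * (\<bar>z - z'\<bar> + norm (p - p'))"
proof -
  obtain K L where K: "\<And>z p. in_box m M P z p \<Longrightarrow> \<bar>f z p\<bar> \<le> K"
    and L: "\<And>z p z' p'. in_box m M P z p \<Longrightarrow> in_box m M P z' p' \<Longrightarrow>
      \<bar>f z p - f z' p'\<bar> \<le> L * (\<bar>z - z'\<bar> + norm (p - p'))"
    using assms unfolding lip_bounded_def by blast
  have K': "\<bar>f z p\<bar> \<le> max K 0" if "in_box m M P z p" for z p using K[OF that] by simp
  have L': "\<bar>f z p - f z' p'\<bar> \<le> max L 0 * (\<bar>z - z'\<bar> + norm (p - p'))"
    if "in_box m M P z p" "in_box m M P z' p'" for z p z' p'
  proof -
    have "L * (\<bar>z - z'\<bar> + norm (p - p')) \<le> max L 0 * (\<bar>z - z'\<bar> + norm (p - p'))"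
      by (intro mult_right_mono) auto
    then show ?thesis using L[OF that] by linarith
  qed
  show ?thesis using that[of "max K 0" "max L 0"] K' L' by auto
qed

lemma lip_bounded_const: "lip_bounded m M P (\<lambda>z p. k)"
  by (rule lip_boundedI[where K = "\<bar>k\<bar>" and L = 0]) auto

lemma lip_bounded_fst: "lip_bounded m M P (\<lambda>z p. z)"
  by (rule lip_boundedI[where K = "\<bar>m\<bar> + \<bar>M\<bar>" and L = 1]) (auto simp: in_box_def)

lemma lip_bounded_inner: "lip_bounded m M P (\<lambda>z p. p \<bullet> v)"
proof (rule lip_boundedI[where K = "P * norm v" and L = "norm v"])
  fix z :: real and p :: 'a assume "in_box m M P z p"
  then have "norm p \<le> P" by (simp add: in_box_def)
  then show "\<bar>p \<bullet> v\<bar> \<le> P * norm v"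
    using Cauchy_Schwarz_ineq2[of p v] by (meson mult_right_mono norm_ge_zero order_trans)
next
  fix z z' :: real and p p' :: 'a
  have "\<bar>p \<bullet> v - p' \<bullet> v\<bar> \<le> norm (p - p') * norm v"
    using Cauchy_Schwarz_ineq2[of "p - p'" v] by (simp add: inner_diff_left)
  also have "\<dots> \<le> norm v * (\<bar>z - z'\<bar> + norm (p - p'))" by (simp add: mult.commute mult_left_mono)
  finally show "\<bar>p \<bullet> v - p' \<bullet> v\<bar> \<le> norm v * (\<bar>z - z'\<bar> + norm (p - p'))" .
qed

lemma lip_bounded_add:
  assumes "lip_bounded m M P f" "lip_bounded m M P g"
  shows "lip_bounded m M P (\<lambda>z p. f z p + g z p)"
proof -
  obtain Kf Lf Kg Lg where f: "\<And>z p. in_box m M P z p \<Longrightarrow> \<bar>f z p\<bar> \<le> Kf"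
    "\<And>z p z' p'. in_box m M P z p \<Longrightarrow> in_box m M P z' p' \<Longrightarrow>
      \<bar>f z p - f z' p'\<bar> \<le> Lf * (\<bar>z - z'\<bar> + norm (p - p'))"
    and g: "\<And>z p. in_box m M P z p \<Longrightarrow> \<bar>g z p\<bar> \<le> Kg"
    "\<And>z p z' p'. in_box m M P z p \<Longrightarrow> in_box m M P z' p' \<Longrightarrow>
      \<bar>g z p - g z' p'\<bar> \<le> Lg * (\<bar>z - z'\<bar> + norm (p - p'))"
    using assms by (metis lip_boundedE)
  show ?thesis
  proof (rule lip_boundedI[where K = "Kf + Kg" and L = "Lf + Lg"])
    fix z :: real and p :: 'a assume "in_box m M P z p"
    then show "\<bar>f z p + g z p\<bar> \<le> Kf + Kg" using f(1) g(1) by (smt (verit))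
  next
    fix z z' :: real and p p' :: 'a assume a: "in_box m M P z p" "in_box m M P z' p'"
    show "\<bar>f z p + g z p - (f z' p' + g z' p')\<bar> \<le> (Lf + Lg) * (\<bar>z - z'\<bar> + norm (p - p'))"
      using f(2)[OF a] g(2)[OF a] by (simp add: algebra_simps)
  qed
qed

lemma lip_bounded_minus: "lip_bounded m M P f \<Longrightarrow> lip_bounded m M P (\<lambda>z p. - f z p)"
  unfolding lip_bounded_def by (simp add: abs_minus_commute)

lemma lip_bounded_diff:
  "lip_bounded m M P f \<Longrightarrow> lip_bounded m M P g \<Longrightarrow> lip_bounded m M P (\<lambda>z p. f z p - g z p)"
  using lip_bounded_add[of m M P f "\<lambda>z p. - g z p"] lip_bounded_minus[of m M P g] by simp

lemma lip_bounded_mult: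
  assumes "lip_bounded m M P f" "lip_bounded m M P g"
  shows "lip_bounded m M P (\<lambda>z p. f z p * g z p)"
proof -
  obtain Kf Lf Kg Lg where f: "Kf \<ge> 0" "Lf \<ge> 0" "\<And>z p. in_box m M P z p \<Longrightarrow> \<bar>f z p\<bar> \<le> Kf"
    "\<And>z p z' p'. in_box m M P z p \<Longrightarrow> in_box m M P z' p' \<Longrightarrow>
      \<bar>f z p - f z' p'\<bar> \<le> Lf * (\<bar>z - z'\<bar> + norm (p - p'))"
    and g: "Kg \<ge> 0" "Lg \<ge> 0" "\<And>z p. in_box m M P z p \<Longrightarrow> \<bar>g z p\<bar> \<le> Kg"
    "\<And>z p z' p'. in_box m M P z p \<Longrightarrow> in_box m M P z' p' \<Longrightarrow>
      \<bar>g z p - g z' p'\<bar> \<le> Lg * (\<bar>z - z'\<bar> + norm (p - p'))"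
    using assms by (metis lip_boundedE)
  show ?thesis
  proof (rule lip_boundedI[where K = "Kf * Kg" and L = "Kf * Lg + Kg * Lf"])
    fix z :: real and p :: 'a assume a: "in_box m M P z p"
    show "\<bar>f z p * g z p\<bar> \<le> Kf * Kg" unfolding abs_mult using f(3)[OF a] g(3)[OF a]
      by (intro mult_mono) auto
  next
    fix z z' :: real and p p' :: 'a assume a: "in_box m M P z p" "in_box m M P z' p'"
    define d where "d = \<bar>z - z'\<bar> + norm (p - p')"
    have "f z p * g z p - f z' p' * g z' p' = f z p * (g z p - g z' p') + g z' p' * (f z p - f z' p')"
      by (simp add: algebra_simps)
    then have "\<bar>f z p * g z p - f z' p' * g z' p'\<bar>
        \<le> \<bar>f z p\<bar> * \<bar>g z p - g z' p'\<bar> + \<bar>g z' p'\<bar> * \<bar>f z p - f z' p'\<bar>"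
      by (metis abs_mult abs_triangle_ineq)
    also have "\<dots> \<le> Kf * (Lg * d) + Kg * (Lf * d)"
      using f(3)[OF a(1)] g(4)[OF a] g(3)[OF a(2)] f(4)[OF a] f(1) g(1) unfolding d_def
      by (intro add_mono mult_mono) auto
    finally show "\<bar>f z p * g z p - f z' p' * g z' p'\<bar> \<le> (Kf * Lg + Kg * Lf) * (\<bar>z - z'\<bar> + norm (p - p'))"
      unfolding d_def by (simp add: algebra_simps)
  qed
qed

lemma lip_bounded_inverse:
  assumes "lip_bounded m M P f" "k > 0" "\<And>z p. in_box m M P z p \<Longrightarrow> f z p \<ge> k"
  shows "lip_bounded m M P (\<lambda>z p. 1 / f z p)"
proof -
  obtain Lf where Lf: "\<And>z p z' p'. in_box m M P z p \<Longrightarrow> in_box m M P z' p' \<Longrightarrow>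
      \<bar>f z p - f z' p'\<bar> \<le> Lf * (\<bar>z - z'\<bar> + norm (p - p'))"
    using assms(1) by (metis lip_boundedE)
  show ?thesis
  proof (rule lip_boundedI[where K = "1 / k" and L = "Lf / k\<^sup>2"])
    fix z :: real and p :: 'a assume a: "in_box m M P z p"
    show "\<bar>1 / f z p\<bar> \<le> 1 / k" using assms(3)[OF a] assms(2) by (simp add: frac_le)
  next
    fix z z' :: real and p p' :: 'a assume a: "in_box m M P z p" "in_box m M P z' p'"
    have f1: "f z p \<ge> k" "f z' p' \<ge> k" using assms(3) a by auto
    have "1 / f z p - 1 / f z' p' = (f z' p' - f z p) / (f z p * f z' p')"
      using f1 assms(2) by (simp add: field_simps)
    then have "\<bar>1 / f z p - 1 / f z' p'\<bar> = \<bar>f z p - f z' p'\<bar> / (f z p * f z' p')"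
      using f1 assms(2) by (simp add: abs_minus_commute)
    also have "\<dots> \<le> \<bar>f z p - f z' p'\<bar> / k\<^sup>2"
    proof (rule divide_left_mono)
      show "k\<^sup>2 \<le> f z p * f z' p'" using f1 assms(2) by (simp add: power2_eq_square mult_mono)
      show "0 < f z p * f z' p' * k\<^sup>2" using f1 assms(2) by simp
    qed simp
    also have "\<dots> \<le> Lf * (\<bar>z - z'\<bar> + norm (p - p')) / k\<^sup>2"
      using Lf[OF a] by (simp add: divide_right_mono)
    finally show "\<bar>1 / f z p - 1 / f z' p'\<bar> \<le> Lf / k\<^sup>2 * (\<bar>z - z'\<bar> + norm (p - p'))" by simp
  qed
qed

lemma lip_bounded_sqrt:
  assumes "lip_bounded m M P f" "k > 0" "\<And>z p. in_box m M P z p \<Longrightarrow> f z p \<ge> k"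
  shows "lip_bounded m M P (\<lambda>z p. sqrt (f z p))"
proof -
  obtain Kf Lf where f: "\<And>z p. in_box m M P z p \<Longrightarrow> \<bar>f z p\<bar> \<le> Kf"
    "\<And>z p z' p'. in_box m M P z p \<Longrightarrow> in_box m M P z' p' \<Longrightarrow>
      \<bar>f z p - f z' p'\<bar> \<le> Lf * (\<bar>z - z'\<bar> + norm (p - p'))"
    using assms(1) by (metis lip_boundedE)
  show ?thesis
  proof (rule lip_boundedI[where K = "sqrt Kf" and L = "Lf / (2 * sqrt k)"])
    fix z :: real and p :: 'a assume "in_box m M P z p"
    moreover have "\<bar>sqrt (f z p)\<bar> = sqrt \<bar>f z p\<bar>" by (simp add: real_sqrt_abs')
    ultimately show "\<bar>sqrt (f z p)\<bar> \<le> sqrt Kf" using f(1) by simp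
  next
    fix z z' :: real and p p' :: 'a assume a: "in_box m M P z p" "in_box m M P z' p'"
    have sk: "sqrt k > 0" using assms(2) by simp
    have f1: "f z p \<ge> k" "f z' p' \<ge> k" using assms(3) a by auto
    then have s1: "sqrt (f z p) \<ge> sqrt k" "sqrt (f z' p') \<ge> sqrt k" by auto
    have "(sqrt (f z p) - sqrt (f z' p')) * (sqrt (f z p) + sqrt (f z' p')) = f z p - f z' p'"
      using f1 assms(2) by (simp add: algebra_simps)
    then have "\<bar>sqrt (f z p) - sqrt (f z' p')\<bar> * (sqrt (f z p) + sqrt (f z' p')) = \<bar>f z p - f z' p'\<bar>"
      using s1 sk by (metis abs_mult abs_of_pos add_pos_pos order_less_le_trans)
    moreover have "2 * sqrt k \<le> sqrt (f z p) + sqrt (f z' p')" using s1 by linarith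
    ultimately have "\<bar>sqrt (f z p) - sqrt (f z' p')\<bar> * (2 * sqrt k) \<le> \<bar>f z p - f z' p'\<bar>"
      by (metis abs_ge_zero mult_left_mono)
    then have "\<bar>sqrt (f z p) - sqrt (f z' p')\<bar> \<le> \<bar>f z p - f z' p'\<bar> / (2 * sqrt k)"
      using sk by (simp add: le_divide_eq)
    also have "\<dots> \<le> Lf * (\<bar>z - z'\<bar> + norm (p - p')) / (2 * sqrt k)"
      using f(2)[OF a] sk by (simp add: divide_right_mono)
    finally show "\<bar>sqrt (f z p) - sqrt (f z' p')\<bar> \<le> Lf / (2 * sqrt k) * (\<bar>z - z'\<bar> + norm (p - p'))"
      by simp
  qed
qed

lemma lip_bounded_sum:
  "finite I \<Longrightarrow> (\<And>i. i \<in> I \<Longrightarrow> lip_bounded m M P (f i)) \<Longrightarrow>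
    lip_bounded m M P (\<lambda>z p. \<Sum>i\<in>I. f i z p)"
proof (induction I rule: finite_induct)
  case empty
  then show ?case using lip_bounded_const[of m M P 0] by simp
next
  case (insert x F)
  then show ?case using lip_bounded_add[of m M P "f x" "\<lambda>z p. \<Sum>i\<in>F. f i z p"] by simp
qed

lemma lip_bounded_norm_square: "lip_bounded m M P (\<lambda>z (p::'a::euclidean_space). (norm p)\<^sup>2)"
proof -
  have "lip_bounded m M P (\<lambda>z (p::'a). \<Sum>i\<in>Basis. (p \<bullet> i) * (p \<bullet> i))"
    by (intro lip_bounded_sum lip_bounded_mult lip_bounded_inner) auto
  moreover have "(\<lambda>(z::real) (p::'a). (norm p)\<^sup>2) = (\<lambda>z p. \<Sum>i\<in>Basis. (p \<bullet> i) * (p \<bullet> i))"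
    by (intro ext, subst norm_square_eq_sum_Basis) (simp add: power2_eq_square)
  ultimately show ?thesis by simp
qed

lemma lip_bounded_weighted_sum:
  fixes f :: "'i \<Rightarrow> real \<Rightarrow> 'a::euclidean_space \<Rightarrow> real"
  assumes "finite I" "\<And>i. i \<in> I \<Longrightarrow> lip_bounded m M P (f i)"
  obtains L where "\<And>w z p z' p'. \<forall>i\<in>I. \<bar>w i\<bar> \<le> W \<Longrightarrow> in_box m M P z p \<Longrightarrow> in_box m M P z' p' \<Longrightarrow>
    \<bar>(\<Sum>i\<in>I. w i * f i z p) - (\<Sum>i\<in>I. w i * f i z' p')\<bar> \<le> L * (\<bar>z - z'\<bar> + norm (p - p'))"
proof -
  have "\<forall>i\<in>I. \<exists>L\<ge>0. \<forall>z p z' p'. in_box m M P z p \<longrightarrow> in_box m M P z' p' \<longrightarrow>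
      \<bar>f i z p - f i z' p'\<bar> \<le> L * (\<bar>z - z'\<bar> + norm (p - p'))"
    using assms(2) by (metis lip_boundedE)
  then obtain L where L: "\<And>i. i \<in> I \<Longrightarrow> L i \<ge> 0"
    "\<And>i z p z' p'. i \<in> I \<Longrightarrow> in_box m M P z p \<Longrightarrow> in_box m M P z' p' \<Longrightarrow>
      \<bar>f i z p - f i z' p'\<bar> \<le> L i * (\<bar>z - z'\<bar> + norm (p - p'))"
    by metis
  show ?thesis
  proof (rule that[of "W * (\<Sum>i\<in>I. L i)"])
    fix w and z z' :: real and p p' :: 'a
    assume w: "\<forall>i\<in>I. \<bar>w i\<bar> \<le> W" and a: "in_box m M P z p" "in_box m M P z' p'"
    define d where "d = \<bar>z - z'\<bar> + norm (p - p')"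
    have "\<bar>(\<Sum>i\<in>I. w i * f i z p) - (\<Sum>i\<in>I. w i * f i z' p')\<bar> = \<bar>\<Sum>i\<in>I. w i * (f i z p - f i z' p')\<bar>"
      by (simp add: sum_subtractf right_diff_distrib)
    also have "\<dots> \<le> (\<Sum>i\<in>I. \<bar>w i\<bar> * \<bar>f i z p - f i z' p'\<bar>)"
      by (rule order_trans[OF sum_abs]) (simp add: abs_mult)
    also have "\<dots> \<le> (\<Sum>i\<in>I. W * (L i * d))"
      using w L a unfolding d_def by (intro sum_mono mult_mono) auto
    finally show "\<bar>(\<Sum>i\<in>I. w i * f i z p) - (\<Sum>i\<in>I. w i * f i z' p')\<bar> \<le> W * (\<Sum>i\<in>I. L i) * d"
      by (simp add: sum_distrib_left sum_distrib_right mult.assoc)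
  qed
qed

lemma quasilinear_op_eq_sum:
  "quasilinear_op c q b z p N = (\<Sum>(k, l)\<in>Basis \<times> Basis.
     N k l * (c z p * ((if k = l then 1 else 0) - (q z p \<bullet> k) * (q z p \<bullet> l)))) + b z p"
proof -
  have "(\<Sum>(k, l)\<in>Basis \<times> Basis. N k l * (c z p * ((if k = l then 1 else 0) - (q z p \<bullet> k) * (q z p \<bullet> l))))
      = (\<Sum>k\<in>Basis. \<Sum>l\<in>Basis. c z p * (if l = k then N k l else 0)
          - c z p * ((q z p \<bullet> k) * (q z p \<bullet> l) * N k l))"
    unfolding sum.cartesian_product[symmetric]
    by (rule sum.cong[OF refl], rule sum.cong[OF refl]) (auto simp: algebra_simps)
  also have "\<dots> = c z p * (\<Sum>k\<in>Basis. \<Sum>l\<in>Basis. if l = k then N k l else 0)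
      - c z p * bform N (q z p) (q z p)"
    unfolding bform_def by (simp only: sum_subtractf sum_distrib_left)
  also have "(\<Sum>k\<in>Basis. \<Sum>l\<in>Basis. if l = k then N k l else 0) = form_trace N"
    unfolding form_trace_def by (rule sum.cong) (simp_all add: sum.delta)
  finally show ?thesis
    by (simp add: quasilinear_op_def principal_part_def algebra_simps)
qed

lemma admissible_if_lip_bounded:
  assumes c: "\<And>m M P. m \<in> Z \<Longrightarrow> M \<in> Z \<Longrightarrow> lip_bounded m M P c"
    and q: "\<And>m M P k. m \<in> Z \<Longrightarrow> M \<in> Z \<Longrightarrow> k \<in> Basis \<Longrightarrow> lip_bounded m M P (\<lambda>z p. q z p \<bullet> k)"
    and b: "\<And>m M P. m \<in> Z \<Longrightarrow> M \<in> Z \<Longrightarrow> lip_bounded m M P b"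
    and c_pos: "\<And>m M P. m \<in> Z \<Longrightarrow> M \<in> Z \<Longrightarrow> \<exists>c0>0. \<forall>z p. in_box m M P z p \<longrightarrow> c0 \<le> c z p"
    and q_small: "\<And>m M P. m \<in> Z \<Longrightarrow> M \<in> Z \<Longrightarrow>
      \<exists>\<theta>>0. \<forall>z p. in_box m M P z p \<longrightarrow> (norm (q z p))\<^sup>2 \<le> 1 - \<theta>"
  shows "admissible Z c q b"
  unfolding admissible_def
proof (intro ballI allI)
  fix m M P Nb assume mM: "m \<in> Z" "M \<in> Z"
  define F where "F kl z p = c z p * ((if fst kl = snd kl then 1 else 0) - (q z p \<bullet> fst kl) * (q z p \<bullet> snd kl))"
    for kl :: "'a \<times> 'a" and z p
  have G: "quasilinear_op c q b z p N = (\<Sum>kl\<in>Basis \<times> Basis. N (fst kl) (snd kl) * F kl z p) + b z p"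
    for z p N unfolding quasilinear_op_eq_sum F_def by (simp add: case_prod_beta)
  have FL: "lip_bounded m M P (F kl)" if "kl \<in> Basis \<times> Basis" for kl
    unfolding F_def using c q mM that by (intro lip_bounded_mult lip_bounded_diff lip_bounded_const) auto
  have fin: "finite (Basis \<times> (Basis :: 'a set))" by simp
  obtain L1 where L1: "\<And>w z p z' p'. \<forall>kl\<in>Basis \<times> Basis. \<bar>w kl\<bar> \<le> Nb \<Longrightarrow>
      in_box m M P z p \<Longrightarrow> in_box m M P z' p' \<Longrightarrow>
      \<bar>(\<Sum>kl\<in>Basis \<times> Basis. w kl * F kl z p) - (\<Sum>kl\<in>Basis \<times> Basis. w kl * F kl z' p')\<bar>
        \<le> L1 * (\<bar>z - z'\<bar> + norm (p - p'))"
    using lip_bounded_weighted_sum[where W = Nb and f = F, OF fin FL] by blast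
  obtain Kb Lb where Lb: "Lb \<ge> 0" "\<And>z p z' p'. in_box m M P z p \<Longrightarrow> in_box m M P z' p' \<Longrightarrow>
      \<bar>b z p - b z' p'\<bar> \<le> Lb * (\<bar>z - z'\<bar> + norm (p - p'))"
    using b[OF mM] by (metis lip_boundedE)
  obtain c0 where c0: "c0 > 0" "\<forall>z p. in_box m M P z p \<longrightarrow> c0 \<le> c z p"
    using c_pos[OF mM] by blast
  obtain \<theta> where \<theta>: "\<theta> > 0" "\<forall>z p. in_box m M P z p \<longrightarrow> (norm (q z p))\<^sup>2 \<le> 1 - \<theta>"
    using q_small[OF mM] by blast
  define L where "L = max 0 (L1 + Lb)"
  have "\<bar>quasilinear_op c q b z p N - quasilinear_op c q b z' p' N\<bar> \<le> L * (\<bar>z - z'\<bar> + norm (p - p'))"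
    if a: "in_box m M P z p" "in_box m M P z' p'" and N: "\<forall>i\<in>Basis. \<forall>j\<in>Basis. \<bar>N i j\<bar> \<le> Nb"
    for z p z' p' N
  proof -
    have "\<forall>kl\<in>Basis \<times> Basis. \<bar>N (fst kl) (snd kl)\<bar> \<le> Nb" using N by auto
    from L1[OF this a] Lb(2)[OF a]
    have "\<bar>quasilinear_op c q b z p N - quasilinear_op c q b z' p' N\<bar>
        \<le> (L1 + Lb) * (\<bar>z - z'\<bar> + norm (p - p'))"
      unfolding G by (simp add: algebra_simps)
    also have "\<dots> \<le> L * (\<bar>z - z'\<bar> + norm (p - p'))" unfolding L_def by (intro mult_right_mono) auto
    finally show ?thesis .
  qed
  then show "\<exists>c0>0. \<exists>\<theta>>0. \<exists>L\<ge>0.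
     (\<forall>z p. in_box m M P z p \<longrightarrow> c0 \<le> c z p \<and> (norm (q z p))\<^sup>2 \<le> 1 - \<theta>) \<and>
     (\<forall>z p z' p' N. in_box m M P z p \<longrightarrow> in_box m M P z' p' \<longrightarrow>
        (\<forall>i\<in>Basis. \<forall>j\<in>Basis. \<bar>N i j\<bar> \<le> Nb) \<longrightarrow>
        \<bar>quasilinear_op c q b z p N - quasilinear_op c q b z' p' N\<bar> \<le> L * (\<bar>z - z'\<bar> + norm (p - p')))"
    using c0 \<theta> by (intro exI[of _ c0] exI[of _ \<theta>] exI[of _ L] conjI) (auto simp: L_def)
qed

subsection \<open>The two operators\<close>

lemma Qop_eq_quasilinear_op:
  "Qop w y = quasilinear_op (\<lambda>z p. 1) (\<lambda>z p. (1 / sqrt (1 + (norm p)\<^sup>2)) *\<^sub>R p) (\<lambda>z p. (norm p)\<^sup>2)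
    (w y) (grad w y) (hessian w y)"
proof -
  let ?p = "grad w y"
  have "hess_grad_grad w y = bform (hessian w y) ?p ?p"
    unfolding hess_grad_grad_def bform_def hessian_def
    by (rule sum.cong[OF refl], rule sum.cong[OF refl]) (simp add: grad_inner_Basis algebra_simps)
  moreover have "(1 / sqrt (1 + (norm ?p)\<^sup>2))\<^sup>2 = 1 / (1 + (norm ?p)\<^sup>2)"
    by (simp add: power_divide add_pos_nonneg)
  moreover have "lap w y = form_trace (hessian w y)" by (simp add: lap_def form_trace_def hessian_def)
  ultimately show ?thesis
    unfolding Qop_def quasilinear_op_def principal_part_def bform_scaleR by simp
qed

lemma admissible_Qop:
  "admissible UNIV (\<lambda>z p. 1) (\<lambda>z p. (1 / sqrt (1 + (norm p)\<^sup>2)) *\<^sub>R p)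
    (\<lambda>z (p::'a::euclidean_space). (norm p)\<^sup>2)"
proof (rule admissible_if_lip_bounded)
  fix m M P :: real and k :: 'a
  have "lip_bounded m M P (\<lambda>z (p::'a). sqrt (1 + (norm p)\<^sup>2))"
    by (rule lip_bounded_sqrt[where k = 1]) (auto intro: lip_bounded_add lip_bounded_const lip_bounded_norm_square)
  then have "lip_bounded m M P (\<lambda>z (p::'a). 1 / sqrt (1 + (norm p)\<^sup>2))"
    by (rule lip_bounded_inverse[where k = 1]) auto
  then have "lip_bounded m M P (\<lambda>z (p::'a). 1 / sqrt (1 + (norm p)\<^sup>2) * (p \<bullet> k))"
    by (intro lip_bounded_mult lip_bounded_inner)
  then show "lip_bounded m M P (\<lambda>z p. ((1 / sqrt (1 + (norm p)\<^sup>2)) *\<^sub>R p) \<bullet> k)" by simp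
  show "lip_bounded m M P (\<lambda>z (p::'a). 1)" by (rule lip_bounded_const)
  show "lip_bounded m M P (\<lambda>z (p::'a). (norm p)\<^sup>2)" by (rule lip_bounded_norm_square)
  have qbound: "(norm ((1 / sqrt (1 + (norm p)\<^sup>2)) *\<^sub>R p))\<^sup>2 \<le> 1 - 1 / (1 + P\<^sup>2)"
    if "in_box m M P z p" for z and p :: 'a
  proof -
    have "(norm p)\<^sup>2 \<le> P\<^sup>2" using that by (intro power_mono) (auto simp: in_box_def)
    moreover have pos: "1 + (norm p)\<^sup>2 > 0" by (simp add: add_pos_nonneg)
    ultimately have "1 / (1 + P\<^sup>2) \<le> 1 / (1 + (norm p)\<^sup>2)" by (intro divide_left_mono) auto
    moreover have "(norm ((1 / sqrt (1 + (norm p)\<^sup>2)) *\<^sub>R p))\<^sup>2 = 1 - 1 / (1 + (norm p)\<^sup>2)"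
      using pos by (simp add: power_mult_distrib power_divide field_simps)
    ultimately show ?thesis by simp
  qed
  show "\<exists>\<theta>>0. \<forall>z (p::'a). in_box m M P z p \<longrightarrow> (norm ((1 / sqrt (1 + (norm p)\<^sup>2)) *\<^sub>R p))\<^sup>2 \<le> 1 - \<theta>"
    by (rule exI[of _ "1 / (1 + P\<^sup>2)"]) (use qbound in \<open>auto simp: add_pos_nonneg\<close>)
  show "\<exists>c0>0. \<forall>z (p::'a). in_box m M P z p \<longrightarrow> c0 \<le> (1::real)"
    by (rule exI[of _ "1::real"]) simp
qed

lemma pd_flux_component:
  fixes u :: "'a::euclidean_space \<Rightarrow> real"
  defines "T \<equiv> \<lambda>z. (u z)\<^sup>2 + (\<Sum>j\<in>Basis. (pd j u z)\<^sup>2)"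
  assumes du: "u differentiable (at x)" and dpu: "\<forall>j\<in>Basis. pd j u differentiable (at x)"
    and pos: "u x > 0" and i: "i \<in> Basis"
  shows "pd i (\<lambda>z. u z / sqrt (T z) * pd i u z) x
    = ((grad u x \<bullet> i) * sqrt (T x) - u x * ((2 * u x * (grad u x \<bullet> i)
        + (\<Sum>j\<in>Basis. 2 * (grad u x \<bullet> j) * hessian u x i j)) / (2 * sqrt (T x))))
        / (sqrt (T x) * sqrt (T x)) * (grad u x \<bullet> i) + hessian u x i i * (u x / sqrt (T x))"
proof -
  define a where "a = u x"
  define p where "p = grad u x"
  define N where "N = hessian u x"
  define S where "S = sqrt (T x)"
  define DT where "DT = 2 * a * (p \<bullet> i) + (\<Sum>j\<in>Basis. 2 * (p \<bullet> j) * N i j)"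
  have T0: "T x > 0" unfolding T_def using pos by (intro add_pos_nonneg sum_nonneg) auto
  then have S: "S > 0" by (simp add: S_def)
  have "T differentiable (at x)" unfolding T_def using du dpu by simp
  then obtain D where "(T has_derivative D) (at x)" by (auto simp: differentiable_def)
  from has_derivative_real_sqrt[of T x, OF T0 this]
  have dsT: "(\<lambda>z. sqrt (T z)) differentiable (at x)" by (rule differentiableI)
  have du_line: "((\<lambda>t. u (x + t *\<^sub>R i)) has_real_derivative p \<bullet> i) (at 0)"
    using has_real_derivative_line_Basis[OF du i] by (simp add: p_def grad_inner_Basis i)
  have dpu_line: "((\<lambda>t. pd j u (x + t *\<^sub>R i)) has_real_derivative N i j) (at 0)" if "j \<in> Basis" for j
    using has_real_derivative_line_Basis[of "pd j u" x i] dpu that i by (simp add: N_def hessian_def)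
  have "((\<lambda>t. T (x + t *\<^sub>R i)) has_real_derivative DT) (at 0)"
    unfolding T_def DT_def
  proof (rule DERIV_add)
    show "((\<lambda>t. (u (x + t *\<^sub>R i))\<^sup>2) has_real_derivative 2 * a * (p \<bullet> i)) (at 0)"
      using DERIV_power[OF du_line, of 2] by (simp add: a_def mult_ac)
    show "((\<lambda>t. \<Sum>j\<in>Basis. (pd j u (x + t *\<^sub>R i))\<^sup>2) has_real_derivative
        (\<Sum>j\<in>Basis. 2 * (p \<bullet> j) * N i j)) (at 0)"
      using DERIV_power[OF dpu_line, of _ 2]
      by (intro DERIV_sum) (simp add: p_def grad_inner_Basis mult_ac)
  qed
  from DERIV_chain'[OF this DERIV_real_sqrt] T0
  have "((\<lambda>t. sqrt (T (x + t *\<^sub>R i))) has_real_derivative DT / (2 * S)) (at 0)"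
    by (simp add: S_def field_simps)
  from DERIV_divide[OF du_line this] S
  have "((\<lambda>t. u (x + t *\<^sub>R i) / sqrt (T (x + t *\<^sub>R i))) has_real_derivative
      ((p \<bullet> i) * S - a * (DT / (2 * S))) / (S * S)) (at 0)"
    by (simp add: S_def a_def)
  from DERIV_mult[OF this dpu_line[OF i]]
  have "((\<lambda>t. u (x + t *\<^sub>R i) / sqrt (T (x + t *\<^sub>R i)) * pd i u (x + t *\<^sub>R i)) has_real_derivative
      ((p \<bullet> i) * S - a * (DT / (2 * S))) / (S * S) * (p \<bullet> i) + N i i * (a / S)) (at 0)"
    by (simp add: S_def a_def p_def grad_inner_Basis i)
  moreover have "((\<lambda>t. u (x + t *\<^sub>R i) / sqrt (T (x + t *\<^sub>R i)) * pd i u (x + t *\<^sub>R i))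
      has_real_derivative pd i (\<lambda>z. u z / sqrt (T z) * pd i u z) x) (at 0)"
    using du dpu i dsT S by (intro has_real_derivative_line_Basis) (auto simp: S_def)
  ultimately show ?thesis
    unfolding DT_def a_def p_def N_def S_def by (rule DERIV_unique[symmetric])
qed

definition graph_norm :: "real \<Rightarrow> 'a::real_normed_vector \<Rightarrow> real" where
  "graph_norm z p = sqrt (z\<^sup>2 + (norm p)\<^sup>2)"

lemma flux_divergence_identity:
  fixes a S :: real and p :: "'a::euclidean_space" and N :: "'a \<Rightarrow> 'a \<Rightarrow> real"
  assumes S: "S > 0"
  shows "(\<Sum>i\<in>Basis. (((p \<bullet> i) * S - a * ((2 * a * (p \<bullet> i) + (\<Sum>j\<in>Basis. 2 * (p \<bullet> j) * N i j)) / (2 * S)))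
            / (S * S)) * (p \<bullet> i) + N i i * (a / S))
       = a / S * principal_part ((1 / S) *\<^sub>R p) N + (norm p)\<^sup>2 / S - a\<^sup>2 * (norm p)\<^sup>2 / S ^ 3"
proof -
  have summand: "(((p \<bullet> i) * S - a * ((2 * a * (p \<bullet> i) + (\<Sum>j\<in>Basis. 2 * (p \<bullet> j) * N i j)) / (2 * S)))
            / (S * S)) * (p \<bullet> i) + N i i * (a / S)
     = (p \<bullet> i)\<^sup>2 / S - a\<^sup>2 * (p \<bullet> i)\<^sup>2 / S ^ 3 - a / S ^ 3 * (\<Sum>j\<in>Basis. (p \<bullet> i) * (p \<bullet> j) * N i j)
       + a / S * N i i" for i
  proof -
    have "(\<Sum>j\<in>Basis. 2 * (p \<bullet> j) * N i j) = 2 * (\<Sum>j\<in>Basis. (p \<bullet> j) * N i j)"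
      by (simp add: sum_distrib_left mult.assoc)
    moreover have "(\<Sum>j\<in>Basis. (p \<bullet> i) * (p \<bullet> j) * N i j) = (p \<bullet> i) * (\<Sum>j\<in>Basis. (p \<bullet> j) * N i j)"
      by (simp add: sum_distrib_left mult.assoc)
    ultimately show ?thesis using S by (simp add: field_simps power2_eq_square power3_eq_cube)
  qed
  have "(\<Sum>i\<in>Basis. (((p \<bullet> i) * S - a * ((2 * a * (p \<bullet> i) + (\<Sum>j\<in>Basis. 2 * (p \<bullet> j) * N i j)) / (2 * S)))
            / (S * S)) * (p \<bullet> i) + N i i * (a / S))
     = (\<Sum>i\<in>Basis. (p \<bullet> i)\<^sup>2) / S - a\<^sup>2 * (\<Sum>i\<in>Basis. (p \<bullet> i)\<^sup>2) / S ^ 3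
       - a / S ^ 3 * (\<Sum>i\<in>Basis. \<Sum>j\<in>Basis. (p \<bullet> i) * (p \<bullet> j) * N i j) + a / S * form_trace N"
    unfolding summand form_trace_def
    by (simp add: sum.distrib sum_subtractf sum_divide_distrib sum_distrib_left)
  also have "(\<Sum>i\<in>Basis. (p \<bullet> i)\<^sup>2) = (norm p)\<^sup>2" by (simp add: norm_square_eq_sum_Basis)
  also have "(\<Sum>i\<in>Basis. \<Sum>j\<in>Basis. (p \<bullet> i) * (p \<bullet> j) * N i j) = bform N p p" by (simp add: bform_def)
  finally show ?thesis
    unfolding principal_part_def bform_scaleR using S
    by (simp add: field_simps power2_eq_square power3_eq_cube)
qed

text \<open>Expanding the divergence with the product and quotient rules gives
  \<open>div (u Du / S) = (u / S) (\<Delta>u - D\<^sup>2u(Du, Du) / S\<^sup>2) + |Du|\<^sup>2 / S - u\<^sup>2 |Du|\<^sup>2 / S\<^sup>3\<close>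
  with \<open>S = (u\<^sup>2 + |Du|\<^sup>2)\<^sup>1\<^sup>/\<^sup>2\<close>.\<close>

lemma divg_flux_eq_quasilinear_op:
  fixes u :: "'a::euclidean_space \<Rightarrow> real"
  assumes du: "u differentiable (at x)" and dpu: "\<forall>j\<in>Basis. pd j u differentiable (at x)"
    and pos: "u x > 0"
  shows "divg (\<lambda>z. (u z / sqrt ((u z)\<^sup>2 + (norm (grad u z))\<^sup>2)) *\<^sub>R grad u z) x
    = quasilinear_op (\<lambda>z p. z / graph_norm z p) (\<lambda>z p. (1 / graph_norm z p) *\<^sub>R p)
        (\<lambda>z p. (norm p)\<^sup>2 / graph_norm z p - z\<^sup>2 * (norm p)\<^sup>2 / graph_norm z p ^ 3)
        (u x) (grad u x) (hessian u x)"
proof -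
  define T where "T z = (u z)\<^sup>2 + (\<Sum>j\<in>Basis. (pd j u z)\<^sup>2)" for z
  define S where "S = graph_norm (u x) (grad u x)"
  have S_eq: "S = sqrt (T x)" by (simp add: S_def T_def graph_norm_def norm_grad_square)
  have S: "S > 0" using pos by (simp add: S_def graph_norm_def add_pos_nonneg)
  have "(\<lambda>z. ((u z / sqrt ((u z)\<^sup>2 + (norm (grad u z))\<^sup>2)) *\<^sub>R grad u z) \<bullet> i)
      = (\<lambda>z. u z / sqrt (T z) * pd i u z)" if "i \<in> Basis" for i
    by (rule ext) (simp add: T_def norm_grad_square grad_inner_Basis that)
  then have "divg (\<lambda>z. (u z / sqrt ((u z)\<^sup>2 + (norm (grad u z))\<^sup>2)) *\<^sub>R grad u z) x
      = (\<Sum>i\<in>Basis. pd i (\<lambda>z. u z / sqrt (T z) * pd i u z) x)"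
    unfolding divg_def by (intro sum.cong) simp_all
  also have "\<dots> = (\<Sum>i\<in>Basis. (((grad u x \<bullet> i) * S - u x * ((2 * u x * (grad u x \<bullet> i)
        + (\<Sum>j\<in>Basis. 2 * (grad u x \<bullet> j) * hessian u x i j)) / (2 * S)))
        / (S * S)) * (grad u x \<bullet> i) + hessian u x i i * (u x / S))"
    unfolding S_eq T_def using du dpu pos by (intro sum.cong refl pd_flux_component)
  also have "\<dots> = u x / S * principal_part ((1 / S) *\<^sub>R grad u x) (hessian u x)
      + (norm (grad u x))\<^sup>2 / S - (u x)\<^sup>2 * (norm (grad u x))\<^sup>2 / S ^ 3"
    by (rule flux_divergence_identity[OF S])
  finally show ?thesis by (simp add: quasilinear_op_def S_def)
qed

lemma graph_norm_ge: "0 < m \<Longrightarrow> m \<le> z \<Longrightarrow> m \<le> graph_norm z p"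
  unfolding graph_norm_def
  by (rule real_le_rsqrt) (smt (verit) power_mono zero_le_power2)

lemma lip_bounded_graph_norm_inverse:
  assumes m: "m > 0"
  shows "lip_bounded m M P (\<lambda>z (p::'a::euclidean_space). 1 / graph_norm z p)"
proof -
  have "lip_bounded m M P (\<lambda>z (p::'a). z * z + (norm p)\<^sup>2)"
    by (intro lip_bounded_add lip_bounded_mult lip_bounded_fst lip_bounded_norm_square)
  moreover have "(\<lambda>z (p::'a). z * z + (norm p)\<^sup>2) = (\<lambda>z p. z\<^sup>2 + (norm p)\<^sup>2)"
    by (simp add: power2_eq_square)
  ultimately have "lip_bounded m M P (\<lambda>z (p::'a). z\<^sup>2 + (norm p)\<^sup>2)" by simp
  moreover have "m\<^sup>2 \<le> z\<^sup>2 + (norm p)\<^sup>2" if "in_box m M P z p" for z and p :: 'a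
  proof -
    have "m\<^sup>2 \<le> z\<^sup>2" using that m by (intro power_mono) (auto simp: in_box_def)
    then show ?thesis by (simp add: add_increasing2)
  qed
  ultimately have "lip_bounded m M P (\<lambda>z (p::'a). sqrt (z\<^sup>2 + (norm p)\<^sup>2))"
    using m by (intro lip_bounded_sqrt[where k = "m\<^sup>2"]) auto
  then show ?thesis
    using m graph_norm_ge[OF m] unfolding graph_norm_def[abs_def]
    by (intro lip_bounded_inverse[where k = m]) (auto simp: in_box_def)
qed

lemma admissible_flux:
  "admissible {0<..} (\<lambda>z p. z / graph_norm z p) (\<lambda>z p. (1 / graph_norm z p) *\<^sub>R p)
    (\<lambda>z (p::'a::euclidean_space). (norm p)\<^sup>2 / graph_norm z p - z\<^sup>2 * (norm p)\<^sup>2 / graph_norm z p ^ 3)"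
proof (rule admissible_if_lip_bounded; simp only: greaterThan_iff)
  fix m M P :: real and k :: 'a assume m: "0 < m" and "0 < M"
  note inv = lip_bounded_graph_norm_inverse[OF m, of M P]
  have "lip_bounded m M P (\<lambda>z (p::'a). z * (1 / graph_norm z p))"
    using inv by (intro lip_bounded_mult lip_bounded_fst)
  then show "lip_bounded m M P (\<lambda>z (p::'a). z / graph_norm z p)" by simp
  have "lip_bounded m M P (\<lambda>z (p::'a). 1 / graph_norm z p * (p \<bullet> k))"
    using inv by (intro lip_bounded_mult lip_bounded_inner)
  then show "lip_bounded m M P (\<lambda>z p. ((1 / graph_norm z p) *\<^sub>R p) \<bullet> k)" by simp
  have "lip_bounded m M P (\<lambda>z (p::'a). (norm p)\<^sup>2 * (1 / graph_norm z p)
      - z * z * (norm p)\<^sup>2 * (1 / graph_norm z p * (1 / graph_norm z p) * (1 / graph_norm z p)))"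
    using inv by (intro lip_bounded_diff lip_bounded_mult lip_bounded_fst lip_bounded_norm_square)
  then show "lip_bounded m M P (\<lambda>z (p::'a). (norm p)\<^sup>2 / graph_norm z p - z\<^sup>2 * (norm p)\<^sup>2 / graph_norm z p ^ 3)"
    by (simp add: power2_eq_square power3_eq_cube)
  define B where "B = M\<^sup>2 + P\<^sup>2 + 1"
  have B: "B > 0" by (simp add: B_def add_nonneg_pos)
  have box: "0 < z" "m\<^sup>2 \<le> z\<^sup>2" "z\<^sup>2 + (norm p)\<^sup>2 \<le> B" "0 < z\<^sup>2 + (norm p)\<^sup>2"
    if "in_box m M P z p" for z and p :: 'a
  proof -
    show "0 < z" "m\<^sup>2 \<le> z\<^sup>2" using that m by (auto simp: in_box_def intro: power_mono)
    have "z\<^sup>2 \<le> M\<^sup>2" "(norm p)\<^sup>2 \<le> P\<^sup>2" using that m by (auto simp: in_box_def intro!: power_mono)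
    then show "z\<^sup>2 + (norm p)\<^sup>2 \<le> B" by (simp add: B_def)
    show "0 < z\<^sup>2 + (norm p)\<^sup>2" using \<open>0 < z\<close> by (simp add: add_pos_nonneg)
  qed
  have "m / sqrt B \<le> z / graph_norm z p" if "in_box m M P z p" for z and p :: 'a
  proof -
    have "m / sqrt B \<le> z / sqrt B" using that B by (simp add: in_box_def divide_right_mono)
    also have "\<dots> \<le> z / graph_norm z p"
      using box[OF that] by (intro divide_left_mono) (auto simp: graph_norm_def)
    finally show ?thesis .
  qed
  moreover have "m / sqrt B > 0" using m B by simp
  ultimately show "\<exists>c0>0. \<forall>z (p::'a). in_box m M P z p \<longrightarrow> c0 \<le> z / graph_norm z p" by blast
  have "(norm ((1 / graph_norm z p) *\<^sub>R p))\<^sup>2 \<le> 1 - m\<^sup>2 / B" if "in_box m M P z p" for z and p :: 'a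
  proof -
    note b = box[OF that]
    have nz: "z\<^sup>2 + (norm p)\<^sup>2 \<noteq> 0" using b(4) by linarith
    have "(norm ((1 / graph_norm z p) *\<^sub>R p))\<^sup>2 = (norm p)\<^sup>2 / (z\<^sup>2 + (norm p)\<^sup>2)"
      using b(4) by (simp add: graph_norm_def power_mult_distrib power_divide)
    also have "\<dots> = 1 - z\<^sup>2 / (z\<^sup>2 + (norm p)\<^sup>2)" using nz by (simp add: field_simps)
    finally have "(norm ((1 / graph_norm z p) *\<^sub>R p))\<^sup>2 = 1 - z\<^sup>2 / (z\<^sup>2 + (norm p)\<^sup>2)" .
    moreover have "m\<^sup>2 / B \<le> z\<^sup>2 / (z\<^sup>2 + (norm p)\<^sup>2)"
      using b B by (intro frac_le) auto
    ultimately show ?thesis by simp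
  qed
  moreover have "m\<^sup>2 / B > 0" using m B by simp
  ultimately show "\<exists>\<theta>>0. \<forall>z (p::'a). in_box m M P z p \<longrightarrow> (norm ((1 / graph_norm z p) *\<^sub>R p))\<^sup>2 \<le> 1 - \<theta>"
    by blast
qed

theorem mainTheorem4:
  fixes U :: "'a::euclidean_space set"
  assumes "open U" and "connected U"
  shows "(\<forall>w w'. C2_on U w \<and> C2_on U w' \<and>
            (\<forall>y\<in>U. Qop w y \<ge> Qop w' y) \<and> (\<forall>y\<in>U. w y \<le> w' y) \<and>
            (\<exists>x\<in>U. w x = w' x) \<longrightarrow> (\<forall>y\<in>U. w y = w' y))
       \<and> (\<forall>u u'. C2_on U u \<and> C2_on U u' \<and>
            (\<forall>y\<in>U. u y > 0) \<and> (\<forall>y\<in>U. u' y > 0) \<and>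
            (\<forall>y\<in>U. divg (\<lambda>z. (u z / sqrt ((u z)\<^sup>2 + (norm (grad u z))\<^sup>2)) *\<^sub>R grad u z) y
                   \<ge> divg (\<lambda>z. (u' z / sqrt ((u' z)\<^sup>2 + (norm (grad u' z))\<^sup>2)) *\<^sub>R grad u' z) y) \<and>
            (\<forall>y\<in>U. u y \<le> u' y) \<and>
            (\<exists>x\<in>U. u x = u' x) \<longrightarrow> (\<forall>y\<in>U. u y = u' y))"
proof (intro conjI allI impI; elim conjE bexE)
  fix w w' x
  assume "C2_on U w" "C2_on U w'" "\<forall>y\<in>U. Qop w y \<ge> Qop w' y" "\<forall>y\<in>U. w y \<le> w' y"
    "x \<in> U" "w x = w' x"
  then show "\<forall>y\<in>U. w y = w' y"
    using strong_comparison_principle[OF assms _ _ _ _ _ admissible_Qop]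
    by (simp add: Qop_eq_quasilinear_op)
next
  fix u u' x
  assume C2: "C2_on U u" "C2_on U u'" and pos: "\<forall>y\<in>U. u y > 0" "\<forall>y\<in>U. u' y > 0"
    and div: "\<forall>y\<in>U. divg (\<lambda>z. (u z / sqrt ((u z)\<^sup>2 + (norm (grad u z))\<^sup>2)) *\<^sub>R grad u z) y
      \<ge> divg (\<lambda>z. (u' z / sqrt ((u' z)\<^sup>2 + (norm (grad u' z))\<^sup>2)) *\<^sub>R grad u' z) y"
    and "\<forall>y\<in>U. u y \<le> u' y" "x \<in> U" "u x = u' x"
  moreover have "divg (\<lambda>z. (v z / sqrt ((v z)\<^sup>2 + (norm (grad v z))\<^sup>2)) *\<^sub>R grad v z) y
      = quasilinear_op (\<lambda>z p. z / graph_norm z p) (\<lambda>z p. (1 / graph_norm z p) *\<^sub>R p)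
          (\<lambda>z p. (norm p)\<^sup>2 / graph_norm z p - z\<^sup>2 * (norm p)\<^sup>2 / graph_norm z p ^ 3)
          (v y) (grad v y) (hessian v y)"
    if "v = u \<or> v = u'" "y \<in> U" for v y
    using that C2 pos
    by (intro divg_flux_eq_quasilinear_op) (auto simp: C2_on_differentiable C2_on_pd_differentiable)
  ultimately show "\<forall>y\<in>U. u y = u' y"
    using strong_comparison_principle[OF assms _ _ _ _ _ admissible_flux] by simp
qed

end
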